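(* Let $(X,d,A)$ be a metric pair in which $(X,d)$ is a geodesic space and $A$ is distance minimizing, and let $p\in[1,\infty]$. Then $(\overline{D}_p(X,A),W_p)$ and $(D(X,A),W_p)$ are geodesic spaces.
   Context: A metric on $X$ is a map $d:X\times X\to[0,\infty]$ with $d(x,x)=0$, symmetry and the triangle inequality (infinite distances allowed, $d(x,y)=0$ need not imply $x=y$); a metric pair $(X,d,A)$ is such a space with a closed subset $A$. Write $d(x,A)=\inf_{a\in A}d(x,a)$, $A^\delta=\{x:d(x,A)<\delta\}$. $A$ is distance minimizing if for every $x$ with $d(x,A)<\infty$ there is $a\in A$ with $d(x,a)=d(x,A)$. $\overline{D}(X,A)$ is the set of countable formal sums $\hat\alpha=\sum_{i\in I}x_i$ of points of $X\setminus A$ (repetitions allowed); $D(X,A)$ the finite ones; $0$ the empty sum. A matching of $\hat\alpha=\sum_{i\in I}x_i$, $\hat\beta=\sum_{j\in J}y_j$ is a formal sum $\sum_{k\in K}(x_k,y_{\varphi(k)})+\sum_{i\in I\setminus K}(x_i,z_i)+\sum_{j\in J\setminus\varphi(K)}(w_j,y_j)$ with $K\subset I$, $\varphi$ injective, $z_i,w_j\in A$; its $p$-cost is the $\ell^p$ norm (sup norm if $p=\infty$) of the distances of paired points; $W_p$ is the infimum of $p$-costs. $u_\delta(\alpha)$, $\ell_\delta(\alpha)$ are the restrictions of $\hat\alpha$ to $X\setminus A^\delta$ and to $A^\delta\setminus A$. For $p<\infty$, $\overline{D}_p(X,A)=\{\alpha: |u_\infty(\alpha)|<\infty,\ W_p(\ell_\infty(\alpha),0)<\infty\}$;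 $\overline{D}_\infty(X,A)=\{\alpha:|u_\delta(\alpha)|<\infty\ \forall\delta>0\}$. The length of a path $\gamma:[0,1]\to X$ is $\sup\sum_n d(\gamma(t_{n-1}),\gamma(t_n))$ over partitions of $[0,1]$. A geodesic between $x,y$ with $d(x,y)<\infty$ is a path from $x$ to $y$ of length $d(x,y)$; a geodesic space is one where any two points at finite distance are joined by a geodesic. *)

theory Defs
  imports "HOL-Analysis.Analysis"
begin

text \<open>Extended (possibly infinite, pseudo-) metrics on a type 'a, valued in [0,\<infinity>].\<close>

definition metric_on :: "('a \<Rightarrow> 'a \<Rightarrow> ennreal) \<Rightarrow> bool" where
  "metric_on d \<longleftrightarrow> (\<forall>x. d x x = 0) \<and> (\<forall>x y. d x y = d y x) \<and> (\<forall>x y z. d x z \<le> d x y + d y z)"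

definition setdist_e :: "('a \<Rightarrow> 'a \<Rightarrow> ennreal) \<Rightarrow> 'a \<Rightarrow> 'a set \<Rightarrow> ennreal" where
  "setdist_e d x A = (INF a\<in>A. d x a)"

definition mclosed :: "('a \<Rightarrow> 'a \<Rightarrow> ennreal) \<Rightarrow> 'a set \<Rightarrow> bool" where
  "mclosed d A \<longleftrightarrow> (\<forall>x. (\<forall>e::real. e > 0 \<longrightarrow> (\<exists>a\<in>A. d x a < ennreal e)) \<longrightarrow> x \<in> A)"

definition metric_pair :: "('a \<Rightarrow> 'a \<Rightarrow> ennreal) \<Rightarrow> 'a set \<Rightarrow> bool" where
  "metric_pair d A \<longleftrightarrow> metric_on d \<and> mclosed d A"

definition thick :: "('a \<Rightarrow> 'a \<Rightarrow> ennreal) \<Rightarrow> 'a set \<Rightarrow> ennreal \<Rightarrow> 'a set" where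
  "thick d A \<delta> = {x. setdist_e d x A < \<delta>}"

definition dist_minimizing :: "('a \<Rightarrow> 'a \<Rightarrow> ennreal) \<Rightarrow> 'a set \<Rightarrow> bool" where
  "dist_minimizing d A \<longleftrightarrow>
     (\<forall>x. setdist_e d x A < \<infinity> \<longrightarrow> (\<exists>a\<in>A. d x a = setdist_e d x A))"

definition path_cont :: "('b \<Rightarrow> 'b \<Rightarrow> ennreal) \<Rightarrow> (real \<Rightarrow> 'b) \<Rightarrow> bool" where
  "path_cont D \<gamma> \<longleftrightarrow> (\<forall>t\<in>{0..1}. \<forall>e::real. e > 0 \<longrightarrow>
      (\<exists>\<delta>>0. \<forall>s\<in>{0..1}. \<bar>s - t\<bar> < \<delta> \<longrightarrow> D (\<gamma> s) (\<gamma> t) < ennreal e))"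

definition partitions01 :: "(nat \<times> (nat \<Rightarrow> real)) set" where
  "partitions01 = {(n, t). t 0 = 0 \<and> t n = 1 \<and> (\<forall>k<n. t k \<le> t (Suc k))}"

definition path_length :: "('b \<Rightarrow> 'b \<Rightarrow> ennreal) \<Rightarrow> (real \<Rightarrow> 'b) \<Rightarrow> ennreal" where
  "path_length D \<gamma> = (SUP P\<in>partitions01.
      (\<Sum>k\<in>{1..fst P}. D (\<gamma> (snd P (k - 1))) (\<gamma> (snd P k))))"

definition geodesic_space :: "'b set \<Rightarrow> ('b \<Rightarrow> 'b \<Rightarrow> ennreal) \<Rightarrow> bool" where
  "geodesic_space S D \<longleftrightarrow> (\<forall>x\<in>S. \<forall>y\<in>S. D x y < \<infinity> \<longrightarrow>
      (\<exists>\<gamma>. \<gamma> ` {0..1} \<subseteq> S \<and> \<gamma> 0 = x \<and> \<gamma> 1 = y \<and> path_cont D \<gamma> \<and>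
           path_length D \<gamma> = D x y))"

text \<open>Formal sums: a countable formal sum is an indexed family (I, x) with I \<subseteq> nat
  (values of x outside I are irrelevant).\<close>

type_synonym 'a fsum = "nat set \<times> (nat \<Rightarrow> 'a)"

definition fsums :: "'a set \<Rightarrow> 'a fsum set" where
  "fsums A = {(I, x). \<forall>i\<in>I. x i \<notin> A}"

definition fzero :: "'a fsum" where
  "fzero = ({}, \<lambda>_. undefined)"

definition Dfin :: "'a set \<Rightarrow> 'a fsum set" where
  "Dfin A = {\<alpha> \<in> fsums A. finite (fst \<alpha>)}"

definition esum :: "('b \<Rightarrow> ennreal) \<Rightarrow> 'b set \<Rightarrow> ennreal" where
  "esum f S = (SUP F\<in>{F. finite F \<and> F \<subseteq> S}. sum f F)"

definition enn_powr :: "ennreal \<Rightarrow> real \<Rightarrow> ennreal" where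
  "enn_powr x q = (if x = \<infinity> then \<infinity> else ennreal (enn2real x powr q))"

definition is_matching :: "'a set \<Rightarrow> 'a fsum \<Rightarrow> 'a fsum
    \<Rightarrow> nat set \<times> (nat \<Rightarrow> nat) \<times> (nat \<Rightarrow> 'a) \<times> (nat \<Rightarrow> 'a) \<Rightarrow> bool" where
  "is_matching A \<alpha> \<beta> m \<longleftrightarrow> (case (\<alpha>, \<beta>, m) of ((I, x), (J, y), (K, \<phi>, z, w)) \<Rightarrow>
      K \<subseteq> I \<and> inj_on \<phi> K \<and> \<phi> ` K \<subseteq> J \<and> (\<forall>i\<in>I - K. z i \<in> A) \<and> (\<forall>j\<in>J - \<phi> ` K. w j \<in> A))"

definition pcost :: "('a \<Rightarrow> 'a \<Rightarrow> ennreal) \<Rightarrow> ereal \<Rightarrow> 'a fsum \<Rightarrow> 'a fsum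
    \<Rightarrow> nat set \<times> (nat \<Rightarrow> nat) \<times> (nat \<Rightarrow> 'a) \<times> (nat \<Rightarrow> 'a) \<Rightarrow> ennreal" where
  "pcost d p \<alpha> \<beta> m = (case (\<alpha>, \<beta>, m) of ((I, x), (J, y), (K, \<phi>, z, w)) \<Rightarrow>
     (if p = \<infinity> then
        max (SUP k\<in>K. d (x k) (y (\<phi> k)))
          (max (SUP i\<in>I - K. d (x i) (z i)) (SUP j\<in>J - \<phi> ` K. d (w j) (y j)))
      else
        enn_powr
          (esum (\<lambda>k. enn_powr (d (x k) (y (\<phi> k))) (real_of_ereal p)) K
           + esum (\<lambda>i. enn_powr (d (x i) (z i)) (real_of_ereal p)) (I - K)
           + esum (\<lambda>j. enn_powr (d (w j) (y j)) (real_of_ereal p)) (J - \<phi> ` K))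
          (1 / real_of_ereal p)))"

definition Wp :: "('a \<Rightarrow> 'a \<Rightarrow> ennreal) \<Rightarrow> 'a set \<Rightarrow> ereal \<Rightarrow> 'a fsum \<Rightarrow> 'a fsum \<Rightarrow> ennreal" where
  "Wp d A p \<alpha> \<beta> = (INF m\<in>{m. is_matching A \<alpha> \<beta> m}. pcost d p \<alpha> \<beta> m)"

definition u_part :: "('a \<Rightarrow> 'a \<Rightarrow> ennreal) \<Rightarrow> 'a set \<Rightarrow> ennreal \<Rightarrow> 'a fsum \<Rightarrow> 'a fsum" where
  "u_part d A \<delta> \<alpha> = ({i\<in>fst \<alpha>. snd \<alpha> i \<notin> thick d A \<delta>}, snd \<alpha>)"

definition l_part :: "('a \<Rightarrow> 'a \<Rightarrow> ennreal) \<Rightarrow> 'a set \<Rightarrow> ennreal \<Rightarrow> 'a fsum \<Rightarrow> 'a fsum" where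
  "l_part d A \<delta> \<alpha> = ({i\<in>fst \<alpha>. snd \<alpha> i \<in> thick d A \<delta> - A}, snd \<alpha>)"

definition Dbar :: "('a \<Rightarrow> 'a \<Rightarrow> ennreal) \<Rightarrow> 'a set \<Rightarrow> ereal \<Rightarrow> 'a fsum set" where
  "Dbar d A p = (if p = \<infinity> then
       {\<alpha>\<in>fsums A. \<forall>\<delta>::ennreal. \<delta> > 0 \<longrightarrow> finite (fst (u_part d A \<delta> \<alpha>))}
     else
       {\<alpha>\<in>fsums A. finite (fst (u_part d A \<infinity> \<alpha>)) \<and> Wp d A p (l_part d A \<infinity> \<alpha>) fzero < \<infinity>})"

end

(*
  Given \<alpha> and \<beta> at finite distance, take an optimal matching of them. It exists because a
  sequence of almost optimal matchings has a subsequence along which every point either keeps a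
  fixed partner or is matched to points approaching A, and the cost, once charged to the points,
  is lower semicontinuous along such a subsequence. An optimal matching is a family of pairs
  (x_k, y_k) whose distances have l^p norm W_p(\<alpha>, \<beta>). Joining each pair by a constant-speed
  geodesic h_k and letting \<gamma>(t) be the formal sum of those h_k(t) that lie outside A, the same
  family of pairs compares \<gamma>(s) with \<gamma>(t) and gives W_p(\<gamma>(s), \<gamma>(t)) \<le> |s - t| W_p(\<alpha>, \<beta>),
  so \<gamma> is a geodesic. The triangle inequality for the distance to A keeps \<gamma>(t) in Dbar; for
  p = \<infinity> this needs an optimal matching in which no pair is farther apart than both of its points
  are from A, which is obtained by unmatching the offending pairs.
*)

theory Submission
  imports Defs "HOL-Library.Diagonal_Subsequence"
begin

section \<open>Distance to a set\<close>

lemma metric_onD: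
  assumes "metric_on d"
  shows "d x x = 0" "d x y = d y x" "d x y \<le> d x z + d z y"
  using assms unfolding metric_on_def by blast+

lemma setdist_e_le: "a \<in> A \<Longrightarrow> setdist_e d x A \<le> d x a"
  unfolding setdist_e_def by (rule INF_lower)

lemma setdist_e_triangle:
  assumes "metric_on d"
  shows "setdist_e d x A \<le> d x y + setdist_e d y A"
proof (cases "A = {}")
  case True
  then show ?thesis by (simp add: setdist_e_def)
next
  case False
  have "setdist_e d x A \<le> (INF a\<in>A. d x y + d y a)"
    unfolding setdist_e_def by (intro INF_mono) (use metric_onD(3)[OF assms] in blast)
  also have "\<dots> = d x y + setdist_e d y A"
    unfolding setdist_e_def
    using continuous_at_Inf_mono[of "\<lambda>z. d x y + z" "(d y) ` A"] False
    using continuous_add[of "at_right (Inf ((d y) ` A))" "\<lambda>z. d x y" "\<lambda>z. z"]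
    by (auto simp: mono_def image_comp add_left_mono)
  finally show ?thesis .
qed

lemma setdist_e_eq_0: "metric_on d \<Longrightarrow> a \<in> A \<Longrightarrow> setdist_e d a A = 0"
  using setdist_e_le[of a A d a] metric_onD(1) by fastforce

lemma setdist_e_pos:
  assumes "mclosed d A" "x \<notin> A"
  shows "0 < setdist_e d x A"
proof (rule ccontr)
  assume "\<not> 0 < setdist_e d x A"
  then have "(INF a\<in>A. d x a) < ennreal e" if "e > 0" for e
    using that by (simp add: setdist_e_def)
  then have "\<exists>a\<in>A. d x a < ennreal e" if "e > 0" for e
    using that by (simp add: INF_less_iff)
  then show False using assms unfolding mclosed_def by blast
qed

definition nearest :: "('a \<Rightarrow> 'a \<Rightarrow> ennreal) \<Rightarrow> 'a set \<Rightarrow> 'a \<Rightarrow> 'a" where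
  "nearest d A x = (SOME a. a \<in> A \<and> d x a = setdist_e d x A)"

lemma nearest:
  assumes "dist_minimizing d A" "setdist_e d x A < \<infinity>"
  shows "nearest d A x \<in> A" "d x (nearest d A x) = setdist_e d x A"
proof -
  have "\<exists>a. a \<in> A \<and> d x a = setdist_e d x A"
    using assms unfolding dist_minimizing_def by blast
  from someI_ex[OF this] show "nearest d A x \<in> A" "d x (nearest d A x) = setdist_e d x A"
    unfolding nearest_def by blast+
qed

lemma enn_powr_eq_top_iff: "q \<ge> 0 \<Longrightarrow> enn_powr x q = \<infinity> \<longleftrightarrow> x = \<infinity>"
  unfolding enn_powr_def by auto

lemma enn_powr_0 [simp]: "enn_powr 0 q = 0"
  unfolding enn_powr_def by simp

lemma enn_powr_mono:
  assumes "x \<le> y" "q \<ge> 0"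
  shows "enn_powr x q \<le> enn_powr y q"
proof (cases "y = \<infinity>")
  case True
  then show ?thesis by (simp add: enn_powr_def)
next
  case False
  then have "x \<noteq> \<infinity>" using assms(1) top.extremum_unique by auto
  then show ?thesis using False assms
    by (auto simp: enn_powr_def enn2real_mono top.not_eq_extremum intro!: ennreal_leI powr_mono2)
qed

lemma enn_powr_powr_inverse:
  assumes "q > 0"
  shows "enn_powr (enn_powr x q) (1 / q) = x"
proof (cases "x = \<infinity>")
  case True
  then show ?thesis by (simp add: enn_powr_def)
next
  case False
  have "(enn2real x powr q) powr (1/q) = enn2real x"
    using assms by (simp add: powr_powr)
  then show ?thesis using False assms
    by (simp add: enn_powr_def top.not_eq_extremum)
qed

lemma enn_powr_inverse_powr:
  assumes "q > 0"
  shows "enn_powr (enn_powr x (1 / q)) q = x"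
  using enn_powr_powr_inverse[of "1/q" x] assms by simp

lemma enn_powr_mult:
  assumes "c \<ge> 0" "q > 0"
  shows "enn_powr (ennreal c * x) q = ennreal (c powr q) * enn_powr x q"
proof (cases "x = \<infinity>")
  case True
  then show ?thesis using assms
    by (cases "c = 0") (auto simp: enn_powr_def ennreal_mult_top)
next
  case False
  then have "ennreal c * x \<noteq> \<infinity>" by (simp add: ennreal_mult_eq_top_iff)
  moreover have "enn2real (ennreal c * x) = c * enn2real x"
    using assms by (simp add: enn2real_mult)
  ultimately show ?thesis using False assms
    by (simp add: enn_powr_def powr_mult ennreal_mult'[symmetric] enn2real_nonneg)
qed

lemma enn_powr_add_le:
  assumes "q > 0"
  shows "enn_powr (a + b) q \<le> ennreal (2 powr q) * (enn_powr a q + enn_powr b q)"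
proof -
  have "a + b \<le> ennreal 2 * max a b"
    by (cases "a \<le> b") (auto simp: max_def mult_2 add_mono)
  then have "enn_powr (a + b) q \<le> enn_powr (ennreal 2 * max a b) q"
    using assms by (intro enn_powr_mono) auto
  also have "\<dots> = ennreal (2 powr q) * enn_powr (max a b) q"
    using assms enn_powr_mult[of 2 q "max a b"] by simp
  also have "enn_powr (max a b) q \<le> enn_powr a q + enn_powr b q"
    by (cases "a \<le> b") (auto simp: max_def add_increasing add_increasing2)
  then have "ennreal (2 powr q) * enn_powr (max a b) q \<le> ennreal (2 powr q) * (enn_powr a q + enn_powr b q)"
    by (rule mult_left_mono) simp
  finally show ?thesis .
qed

section \<open>The \<open>\<ell>\<^sup>p\<close> aggregate of a nonnegative family\<close>

lemma summable_on_ennreal [simp]: "(f::_ \<Rightarrow> ennreal) summable_on S"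
  by (simp add: nonneg_summable_on_complete)

lemma infsum_ennreal_mult_left: "infsum (\<lambda>k. c * f k) S = (c::ennreal) * infsum f S"
  by (simp add: nonneg_infsum_complete sum_distrib_left SUP_mult_left_ennreal)

lemma infsum_ennreal_mono_set: "S \<subseteq> S' \<Longrightarrow> infsum (f::_ \<Rightarrow> ennreal) S \<le> infsum f S'"
  by (simp add: nonneg_infsum_complete) (intro SUP_subset_mono, auto)

definition lp_norm :: "ereal \<Rightarrow> ('i \<Rightarrow> ennreal) \<Rightarrow> 'i set \<Rightarrow> ennreal" where
  "lp_norm p f S = (if p = \<infinity> then (SUP k\<in>S. f k)
     else enn_powr (infsum (\<lambda>k. enn_powr (f k) (real_of_ereal p)) S) (1 / real_of_ereal p))"

lemma real_of_ereal_ge_1: "1 \<le> p \<Longrightarrow> p \<noteq> \<infinity> \<Longrightarrow> 1 \<le> real_of_ereal p"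
  by (cases p) auto

lemma lp_norm_finite_eq:
  assumes "1 \<le> p" "p \<noteq> \<infinity>"
  shows "lp_norm p f S < \<infinity> \<longleftrightarrow> infsum (\<lambda>k. enn_powr (f k) (real_of_ereal p)) S < \<infinity>"
  using assms real_of_ereal_ge_1[OF assms] enn_powr_eq_top_iff[of "1 / real_of_ereal p"]
  by (simp add: lp_norm_def less_top[symmetric])

lemma lp_norm_mono:
  assumes "1 \<le> p" "\<And>k. k \<in> S \<Longrightarrow> f k \<le> g k"
  shows "lp_norm p f S \<le> lp_norm p g S"
proof (cases "p = \<infinity>")
  case True
  then show ?thesis using assms by (auto simp: lp_norm_def intro: SUP_mono)
next
  case False
  then have q: "real_of_ereal p \<ge> 1" using real_of_ereal_ge_1 assms by auto
  have "infsum (\<lambda>k. enn_powr (f k) (real_of_ereal p)) S \<le> infsum (\<lambda>k. enn_powr (g k) (real_of_ereal p)) S"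
    using assms q by (intro infsum_mono) (auto intro: enn_powr_mono)
  then show ?thesis using False q by (auto simp: lp_norm_def intro: enn_powr_mono)
qed

lemma lp_norm_mono_set:
  assumes "1 \<le> p" "S \<subseteq> S'"
  shows "lp_norm p f S \<le> lp_norm p f S'"
proof (cases "p = \<infinity>")
  case True
  then show ?thesis using assms by (auto simp: lp_norm_def intro: SUP_subset_mono)
next
  case False
  then have q: "real_of_ereal p \<ge> 1" using real_of_ereal_ge_1 assms by auto
  have "infsum (\<lambda>k. enn_powr (f k) (real_of_ereal p)) S \<le> infsum (\<lambda>k. enn_powr (f k) (real_of_ereal p)) S'"
    using assms by (intro infsum_ennreal_mono_set) auto
  then show ?thesis using False q by (auto simp: lp_norm_def intro: enn_powr_mono)
qed

lemma lp_norm_reindex: "inj_on g S \<Longrightarrow> lp_norm p f (g ` S) = lp_norm p (f \<circ> g) S"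
  by (simp add: lp_norm_def infsum_reindex image_image o_def)

lemma lp_norm_cong: "(\<And>k. k \<in> S \<Longrightarrow> f k = g k) \<Longrightarrow> lp_norm p f S = lp_norm p g S"
  by (simp add: lp_norm_def cong: infsum_cong SUP_cong)

lemma lp_norm_singleton: "1 \<le> p \<Longrightarrow> lp_norm p f {k} = f k"
  using real_of_ereal_ge_1[of p] by (auto simp: lp_norm_def enn_powr_powr_inverse)

lemma le_lp_norm:
  assumes "1 \<le> p" "k \<in> S"
  shows "f k \<le> lp_norm p f S"
  using lp_norm_mono_set[OF assms(1), of "{k}" S f] lp_norm_singleton[OF assms(1), of f k] assms(2)
  by simp

lemma lp_norm_mult_left:
  assumes "1 \<le> p" "c \<ge> 0"
  shows "lp_norm p (\<lambda>k. ennreal c * f k) S = ennreal c * lp_norm p f S"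
proof (cases "p = \<infinity>")
  case True
  then show ?thesis by (simp add: lp_norm_def SUP_mult_left_ennreal)
next
  case False
  define q where "q = real_of_ereal p"
  have q: "q \<ge> 1" using real_of_ereal_ge_1 assms False by (auto simp: q_def)
  have "lp_norm p (\<lambda>k. ennreal c * f k) S
      = enn_powr (ennreal (c powr q) * infsum (\<lambda>k. enn_powr (f k) q) S) (1/q)"
    using False q assms by (simp add: lp_norm_def q_def enn_powr_mult infsum_ennreal_mult_left)
  also have "\<dots> = ennreal ((c powr q) powr (1/q)) * enn_powr (infsum (\<lambda>k. enn_powr (f k) q) S) (1/q)"
    using q assms by (simp add: enn_powr_mult)
  also have "(c powr q) powr (1/q) = c"
    using q assms by (simp add: powr_powr)
  finally show ?thesis using False by (simp add: lp_norm_def q_def)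
qed

lemma lp_norm_zero_outside:
  assumes "1 \<le> p" "S' \<subseteq> S" "\<And>k. k \<in> S - S' \<Longrightarrow> f k = 0"
  shows "lp_norm p f S = lp_norm p f S'"
proof (cases "p = \<infinity>")
  case True
  have "(SUP k\<in>S. f k) \<le> (SUP k\<in>S'. f k)"
    by (rule SUP_least) (metis DiffI SUP_upper assms(3) zero_le)
  moreover have "(SUP k\<in>S'. f k) \<le> (SUP k\<in>S. f k)"
    using assms(2) by (rule SUP_subset_mono) simp
  ultimately show ?thesis using True by (simp add: lp_norm_def)
next
  case False
  then show ?thesis
    using assms by (simp add: lp_norm_def) (intro arg_cong2[where f=enn_powr] infsum_cong_neutral refl, auto)
qed

lemma lp_norm_le_of_finite_subsets:
  assumes "1 \<le> p" "\<And>F. finite F \<Longrightarrow> F \<subseteq> S \<Longrightarrow> lp_norm p f F \<le> c"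
  shows "lp_norm p f S \<le> c"
proof (cases "p = \<infinity>")
  case True
  have "f k \<le> c" if "k \<in> S" for k
    using assms(2)[of "{k}"] lp_norm_singleton[OF assms(1), of f k] that by simp
  then show ?thesis using True by (auto simp: lp_norm_def intro!: SUP_least)
next
  case False
  define q where "q = real_of_ereal p"
  have q: "q \<ge> 1" using real_of_ereal_ge_1 assms False by (auto simp: q_def)
  have "sum (\<lambda>k. enn_powr (f k) q) F \<le> enn_powr c q" if "finite F" "F \<subseteq> S" for F
  proof -
    have "enn_powr (sum (\<lambda>k. enn_powr (f k) q) F) (1/q) \<le> c"
      using assms(2)[OF that] False that by (simp add: lp_norm_def q_def)
    then have "enn_powr (enn_powr (sum (\<lambda>k. enn_powr (f k) q) F) (1/q)) q \<le> enn_powr c q"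
      using q by (intro enn_powr_mono) auto
    then show ?thesis using q by (simp add: enn_powr_inverse_powr)
  qed
  then have "infsum (\<lambda>k. enn_powr (f k) q) S \<le> enn_powr c q"
    by (subst nonneg_infsum_complete) (auto intro: SUP_least)
  then have "enn_powr (infsum (\<lambda>k. enn_powr (f k) q) S) (1/q) \<le> enn_powr (enn_powr c q) (1/q)"
    using q by (intro enn_powr_mono) auto
  then show ?thesis using q False by (simp add: lp_norm_def enn_powr_powr_inverse q_def)
qed

lemma lp_norm_finite_less_top:
  assumes "1 \<le> p" "finite S" "\<And>k. k \<in> S \<Longrightarrow> f k < \<infinity>"
  shows "lp_norm p f S < \<infinity>"
proof (cases "p = \<infinity>")
  case True
  have "(SUP k\<in>S. f k) \<le> (\<Sum>k\<in>S. f k)"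
    by (intro SUP_least member_le_sum) (auto simp: assms(2))
  moreover have "(\<Sum>k\<in>S. f k) < \<infinity>" using assms by simp
  ultimately show ?thesis using True by (simp add: lp_norm_def)
next
  case False
  have "infsum (\<lambda>k. enn_powr (f k) (real_of_ereal p)) S < \<infinity>"
    using assms real_of_ereal_ge_1[OF assms(1) False] enn_powr_eq_top_iff[of "real_of_ereal p"]
    by (simp add: less_top[symmetric])
  then show ?thesis using lp_norm_finite_eq[OF assms(1) False] by blast
qed

section \<open>Matchings and common representations\<close>

lemma Wp_le_pcost: "is_matching A \<alpha> \<beta> m \<Longrightarrow> Wp d A p \<alpha> \<beta> \<le> pcost d p \<alpha> \<beta> m"
  unfolding Wp_def by (rule INF_lower) simp

text \<open>A matching \<open>(K, \<phi>, z, w)\<close> of \<open>(I, x)\<close> and \<open>(J, y)\<close> as a family of pairs indexed by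
  \<open>I \<uplus> (J - \<phi> ` K)\<close>: \<open>Inl i\<close> carries \<open>x i\<close> to its partner \<open>y (\<phi> i)\<close> or to \<open>z i \<in> A\<close>,
  \<open>Inr j\<close> carries \<open>w j \<in> A\<close> to an unmatched \<open>y j\<close>.\<close>

definition match_index :: "nat set \<Rightarrow> nat set \<Rightarrow> nat set \<Rightarrow> (nat \<Rightarrow> nat) \<Rightarrow> (nat + nat) set" where
  "match_index I J K \<phi> = Inl ` I \<union> Inr ` (J - \<phi> ` K)"

definition match_src :: "(nat \<Rightarrow> 'a) \<Rightarrow> (nat \<Rightarrow> 'a) \<Rightarrow> nat + nat \<Rightarrow> 'a" where
  "match_src x w \<pi> = (case \<pi> of Inl i \<Rightarrow> x i | Inr j \<Rightarrow> w j)"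

definition match_tgt :: "(nat \<Rightarrow> 'a) \<Rightarrow> nat set \<Rightarrow> (nat \<Rightarrow> nat) \<Rightarrow> (nat \<Rightarrow> 'a) \<Rightarrow> nat + nat \<Rightarrow> 'a" where
  "match_tgt y K \<phi> z \<pi> = (case \<pi> of Inl i \<Rightarrow> (if i \<in> K then y (\<phi> i) else z i) | Inr j \<Rightarrow> y j)"

lemma esum_eq_infsum: "esum f S = infsum f S"
  unfolding esum_def by (rule nonneg_infsum_complete[symmetric]) simp

lemma pcost_eq_lp_norm:
  assumes "K \<subseteq> I"
  shows "pcost d p (I, x) (J, y) (K, \<phi>, z, w)
    = lp_norm p (\<lambda>\<pi>. d (match_src x w \<pi>) (match_tgt y K \<phi> z \<pi>)) (match_index I J K \<phi>)"
proof -
  define F where "F \<pi> = d (match_src x w \<pi>) (match_tgt y K \<phi> z \<pi>)" for \<pi>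
  have U: "match_index I J K \<phi> = (Inl ` K \<union> Inl ` (I - K)) \<union> Inr ` (J - \<phi> ` K)"
    using assms by (auto simp: match_index_def)
  have FK: "F (Inl i) = d (x i) (y (\<phi> i))" if "i \<in> K" for i
    using that by (simp add: F_def match_src_def match_tgt_def)
  have FI: "F (Inl i) = d (x i) (z i)" if "i \<notin> K" for i
    using that by (simp add: F_def match_src_def match_tgt_def)
  have FJ: "F (Inr j) = d (w j) (y j)" for j
    by (simp add: F_def match_src_def match_tgt_def)
  show ?thesis
  proof (cases "p = \<infinity>")
    case True
    have "(SUP \<pi>\<in>match_index I J K \<phi>. F \<pi>)
        = sup (sup (SUP k\<in>K. d (x k) (y (\<phi> k))) (SUP i\<in>I - K. d (x i) (z i))) (SUP j\<in>J - \<phi> ` K. d (w j) (y j))"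
      unfolding U SUP_union image_image using FK FI FJ by (intro arg_cong2[where f=sup] SUP_cong) auto
    then show ?thesis using True by (simp add: pcost_def lp_norm_def F_def sup_max max.assoc)
  next
    case False
    define q where "q = real_of_ereal p"
    have "infsum (\<lambda>\<pi>. enn_powr (F \<pi>) q) (match_index I J K \<phi>)
        = infsum (\<lambda>\<pi>. enn_powr (F \<pi>) q) (Inl ` K) + infsum (\<lambda>\<pi>. enn_powr (F \<pi>) q) (Inl ` (I - K))
          + infsum (\<lambda>\<pi>. enn_powr (F \<pi>) q) (Inr ` (J - \<phi> ` K))"
      unfolding U by (subst infsum_Un_disjoint, simp, simp, blast)+ simp
    also have "\<dots> = esum (\<lambda>k. enn_powr (d (x k) (y (\<phi> k))) q) K
        + esum (\<lambda>i. enn_powr (d (x i) (z i)) q) (I - K) + esum (\<lambda>j. enn_powr (d (w j) (y j)) q) (J - \<phi> ` K)"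
    proof -
      have "infsum (\<lambda>\<pi>. enn_powr (F \<pi>) q) (Inl ` (I - K)) = esum (\<lambda>i. enn_powr (d (x i) (z i)) q) (I - K)"
        using FI by (simp add: esum_eq_infsum infsum_reindex o_def) (rule infsum_cong, simp)
      then show ?thesis
        using FK FJ by (simp add: esum_eq_infsum infsum_reindex o_def cong: infsum_cong)
    qed
    finally show ?thesis using False by (simp add: pcost_def lp_norm_def q_def F_def)
  qed
qed

text \<open>Two families over one index set that represent two formal sums form a transport plan
  between them, with the points of \<open>A\<close> playing the role of the diagonal.\<close>

definition represents :: "'a set \<Rightarrow> 'i set \<Rightarrow> ('i \<Rightarrow> 'a) \<Rightarrow> 'a fsum \<Rightarrow> bool" where
  "represents A T u \<alpha> \<longleftrightarrow> (\<exists>T\<^sub>0 e. T\<^sub>0 \<subseteq> T \<and> bij_betw e T\<^sub>0 (fst \<alpha>) \<and>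
     (\<forall>\<tau>\<in>T\<^sub>0. snd \<alpha> (e \<tau>) = u \<tau>) \<and> (\<forall>\<tau>\<in>T - T\<^sub>0. u \<tau> \<in> A))"

lemma representsE:
  assumes "represents A T u \<alpha>"
  obtains T\<^sub>0 e where "T\<^sub>0 \<subseteq> T" "bij_betw e T\<^sub>0 (fst \<alpha>)" "\<And>\<tau>. \<tau> \<in> T\<^sub>0 \<Longrightarrow> snd \<alpha> (e \<tau>) = u \<tau>"
    "\<And>\<tau>. \<tau> \<in> T - T\<^sub>0 \<Longrightarrow> u \<tau> \<in> A"
  using assms unfolding represents_def by blast

lemma represents_cong:
  assumes "represents A T u \<alpha>" "\<And>\<tau>. \<tau> \<in> T \<Longrightarrow> u \<tau> = v \<tau>"
  shows "represents A T v \<alpha>"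
proof -
  obtain T\<^sub>0 e where "T\<^sub>0 \<subseteq> T" "bij_betw e T\<^sub>0 (fst \<alpha>)" "\<And>\<tau>. \<tau> \<in> T\<^sub>0 \<Longrightarrow> snd \<alpha> (e \<tau>) = u \<tau>"
    "\<And>\<tau>. \<tau> \<in> T - T\<^sub>0 \<Longrightarrow> u \<tau> \<in> A"
    using assms(1) by (rule representsE) (rule that)
  then show ?thesis
    unfolding represents_def using assms(2) by (intro exI[of _ T\<^sub>0] exI[of _ e]) auto
qed

lemma represents_self: "represents A I x (I, x)"
  unfolding represents_def by (intro exI[of _ I] exI[of _ id]) auto

lemma represents_fzero: "(\<And>\<tau>. \<tau> \<in> T \<Longrightarrow> u \<tau> \<in> A) \<Longrightarrow> represents A T u fzero"
  unfolding represents_def fzero_def by (intro exI[of _ "{}"] exI[of _ "\<lambda>_. 0"]) (auto simp: bij_betw_def)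

lemma represents_match_src:
  assumes "is_matching A (I, x) (J, y) (K, \<phi>, z, w)"
  shows "represents A (match_index I J K \<phi>) (match_src x w) (I, x)"
proof -
  have "bij_betw projl (Inl ` I) I"
    by (rule bij_betw_imageI) (auto intro: inj_onI simp: image_image)
  then show ?thesis
    unfolding represents_def using assms
    by (intro exI[of _ "Inl ` I"] exI[of _ projl])
      (auto simp: match_index_def match_src_def is_matching_def)
qed

lemma represents_match_tgt:
  assumes "is_matching A (I, x) (J, y) (K, \<phi>, z, w)"
  shows "represents A (match_index I J K \<phi>) (match_tgt y K \<phi> z) (J, y)"
proof -
  have KI: "K \<subseteq> I" and inj: "inj_on \<phi> K" and KJ: "\<phi> ` K \<subseteq> J" and zA: "\<And>i. i \<in> I - K \<Longrightarrow> z i \<in> A"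
    using assms by (auto simp: is_matching_def)
  define e where "e \<pi> = (case \<pi> of Inl i \<Rightarrow> \<phi> i | Inr j \<Rightarrow> j)" for \<pi>
  have "inj_on e (Inl ` K \<union> Inr ` (J - \<phi> ` K))"
  proof (rule inj_onI)
    fix a b assume "a \<in> Inl ` K \<union> Inr ` (J - \<phi> ` K)" "b \<in> Inl ` K \<union> Inr ` (J - \<phi> ` K)" "e a = e b"
    then show "a = b"
      by (elim UnE imageE) (auto simp: e_def dest: inj_onD[OF inj])
  qed
  moreover have "e ` (Inl ` K \<union> Inr ` (J - \<phi> ` K)) = J"
  proof -
    have "e ` (Inl ` K \<union> Inr ` (J - \<phi> ` K)) = \<phi> ` K \<union> (J - \<phi> ` K)"
      by (simp add: image_Un image_image e_def)
    then show ?thesis using KJ by blast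
  qed
  ultimately have "bij_betw e (Inl ` K \<union> Inr ` (J - \<phi> ` K)) J"
    by (rule bij_betw_imageI)
  moreover have "match_tgt y K \<phi> z \<tau> \<in> A" if "\<tau> \<in> match_index I J K \<phi> - (Inl ` K \<union> Inr ` (J - \<phi> ` K))" for \<tau>
    using that zA by (auto simp: match_index_def match_tgt_def)
  moreover have "y (e \<tau>) = match_tgt y K \<phi> z \<tau>" if "\<tau> \<in> Inl ` K \<union> Inr ` (J - \<phi> ` K)" for \<tau>
    using that by (auto simp: match_tgt_def e_def)
  moreover have "Inl ` K \<union> Inr ` (J - \<phi> ` K) \<subseteq> match_index I J K \<phi>"
    using KI by (auto simp: match_index_def)
  ultimately show ?thesis
    unfolding represents_def by (intro exI[of _ "Inl ` K \<union> Inr ` (J - \<phi> ` K)"] exI[of _ e]) simp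
qed

lemma matching_of_represents:
  assumes u: "represents A T u (I, x)" and v: "represents A T v (J, y)"
  obtains K \<phi> z w \<rho> where "is_matching A (I, x) (J, y) (K, \<phi>, z, w)"
    "inj_on \<rho> (match_index I J K \<phi>)" "\<rho> ` match_index I J K \<phi> \<subseteq> T"
    "\<And>\<pi>. \<pi> \<in> match_index I J K \<phi> \<Longrightarrow> match_src x w \<pi> = u (\<rho> \<pi>) \<and> match_tgt y K \<phi> z \<pi> = v (\<rho> \<pi>)"
proof -
  obtain T1 e1 where T1: "T1 \<subseteq> T" "bij_betw e1 T1 I" "\<And>\<tau>. \<tau> \<in> T1 \<Longrightarrow> x (e1 \<tau>) = u \<tau>"
    "\<And>\<tau>. \<tau> \<in> T - T1 \<Longrightarrow> u \<tau> \<in> A"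
    using u by (auto elim: representsE)
  obtain T2 e2 where T2: "T2 \<subseteq> T" "bij_betw e2 T2 J" "\<And>\<tau>. \<tau> \<in> T2 \<Longrightarrow> y (e2 \<tau>) = v \<tau>"
    "\<And>\<tau>. \<tau> \<in> T - T2 \<Longrightarrow> v \<tau> \<in> A"
    using v by (auto elim: representsE)
  define \<iota>1 where "\<iota>1 = inv_into T1 e1"
  define \<iota>2 where "\<iota>2 = inv_into T2 e2"
  have \<iota>1: "\<iota>1 i \<in> T1" "e1 (\<iota>1 i) = i" if "i \<in> I" for i
    using that T1(2) by (auto simp: \<iota>1_def bij_betw_def inv_into_into f_inv_into_f)
  have \<iota>2: "\<iota>2 j \<in> T2" "e2 (\<iota>2 j) = j" if "j \<in> J" for j
    using that T2(2) by (auto simp: \<iota>2_def bij_betw_def inv_into_into f_inv_into_f)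
  have inj\<iota>1: "inj_on \<iota>1 I" and inj\<iota>2: "inj_on \<iota>2 J"
    using T1(2) T2(2) by (auto simp: \<iota>1_def \<iota>2_def bij_betw_def intro: inj_on_inv_into)
  define K where "K = {i\<in>I. \<iota>1 i \<in> T2}"
  define \<phi> where "\<phi> = e2 \<circ> \<iota>1"
  define z where "z = v \<circ> \<iota>1"
  define w where "w = u \<circ> \<iota>2"
  define \<rho> where "\<rho> \<pi> = (case \<pi> of Inl i \<Rightarrow> \<iota>1 i | Inr j \<Rightarrow> \<iota>2 j)" for \<pi>
  have unmatched: "\<iota>2 j \<notin> T1" if "j \<in> J - \<phi> ` K" for j
  proof
    assume j1: "\<iota>2 j \<in> T1"
    define i where "i = e1 (\<iota>2 j)"
    have "i \<in> I" using j1 T1(2) by (auto simp: i_def bij_betw_def)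
    moreover have "\<iota>1 i = \<iota>2 j" using j1 T1(2) by (simp add: i_def \<iota>1_def bij_betw_inv_into_left)
    ultimately have "i \<in> K" "\<phi> i = j" using \<iota>2[of j] that by (auto simp: K_def \<phi>_def)
    then show False using that by auto
  qed
  have "inj_on \<phi> K"
    unfolding \<phi>_def
    by (rule comp_inj_on) (use inj\<iota>1 T2(2) in \<open>auto simp: K_def bij_betw_def intro: inj_on_subset\<close>)
  moreover have "\<phi> ` K \<subseteq> J"
    using T2(2) by (auto simp: K_def \<phi>_def bij_betw_def)
  moreover have "z i \<in> A" if "i \<in> I - K" for i
    using that \<iota>1 T1(1) T2(4) by (auto simp: K_def z_def)
  moreover have "w j \<in> A" if "j \<in> J - \<phi> ` K" for j
  proof -
    have "\<iota>2 j \<in> T - T1" using that \<iota>2(1) T2(1) unmatched by blast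
    then show ?thesis using T1(4) by (simp add: w_def)
  qed
  ultimately have "is_matching A (I, x) (J, y) (K, \<phi>, z, w)"
    by (auto simp: is_matching_def K_def)
  moreover have "inj_on \<rho> (match_index I J K \<phi>)"
  proof (rule inj_onI)
    fix \<pi> \<pi>' assume \<pi>: "\<pi> \<in> match_index I J K \<phi>" and \<pi>': "\<pi>' \<in> match_index I J K \<phi>"
      and eq: "\<rho> \<pi> = \<rho> \<pi>'"
    have no_mix: False if "i \<in> I" "j \<in> J - \<phi> ` K" "\<iota>1 i = \<iota>2 j" for i j
      using \<iota>1(1)[OF that(1)] unmatched[OF that(2)] that(3) by simp
    show "\<pi> = \<pi>'"
      using \<pi> \<pi>' eq
      by (cases \<pi>; cases \<pi>') (auto simp: \<rho>_def match_index_def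
          dest: inj_onD[OF inj\<iota>1] inj_onD[OF inj\<iota>2] no_mix no_mix[OF _ _ sym])
  qed
  moreover have "\<rho> ` match_index I J K \<phi> \<subseteq> T"
    using \<iota>1 \<iota>2 T1(1) T2(1) by (auto simp: \<rho>_def match_index_def)
  moreover have "match_src x w \<pi> = u (\<rho> \<pi>) \<and> match_tgt y K \<phi> z \<pi> = v (\<rho> \<pi>)"
    if "\<pi> \<in> match_index I J K \<phi>" for \<pi>
  proof -
    have "x i = u (\<iota>1 i)" if "i \<in> I" for i using T1(3)[OF \<iota>1(1)[OF that]] \<iota>1(2)[OF that] by simp
    moreover have "y j = v (\<iota>2 j)" if "j \<in> J" for j using T2(3)[OF \<iota>2(1)[OF that]] \<iota>2(2)[OF that] by simp
    ultimately show ?thesis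
      using that T2(3) by (auto simp: match_index_def match_src_def match_tgt_def \<rho>_def K_def \<phi>_def z_def w_def)
  qed
  ultimately show ?thesis using that by blast
qed

lemma Wp_le_lp_norm_represents:
  assumes "1 \<le> p" "represents A T u \<alpha>" "represents A T v \<beta>"
  shows "Wp d A p \<alpha> \<beta> \<le> lp_norm p (\<lambda>\<tau>. d (u \<tau>) (v \<tau>)) T"
proof -
  obtain I x J y where \<alpha>\<beta>: "\<alpha> = (I, x)" "\<beta> = (J, y)" by (cases \<alpha>, cases \<beta>)
  obtain K \<phi> z w \<rho> where m: "is_matching A (I, x) (J, y) (K, \<phi>, z, w)"
    and \<rho>: "inj_on \<rho> (match_index I J K \<phi>)" "\<rho> ` match_index I J K \<phi> \<subseteq> T"
    and uv: "\<And>\<pi>. \<pi> \<in> match_index I J K \<phi> \<Longrightarrow> match_src x w \<pi> = u (\<rho> \<pi>) \<and> match_tgt y K \<phi> z \<pi> = v (\<rho> \<pi>)"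
    by (rule matching_of_represents[OF assms(2,3)[unfolded \<alpha>\<beta>]]) (rule that)
  have "Wp d A p \<alpha> \<beta> \<le> pcost d p (I, x) (J, y) (K, \<phi>, z, w)"
    unfolding \<alpha>\<beta> by (rule Wp_le_pcost[OF m])
  also have "\<dots> = lp_norm p ((\<lambda>\<tau>. d (u \<tau>) (v \<tau>)) \<circ> \<rho>) (match_index I J K \<phi>)"
    using m uv by (simp add: pcost_eq_lp_norm is_matching_def cong: lp_norm_cong)
  also have "\<dots> = lp_norm p (\<lambda>\<tau>. d (u \<tau>) (v \<tau>)) (\<rho> ` match_index I J K \<phi>)"
    by (rule lp_norm_reindex[OF \<rho>(1), symmetric])
  also have "\<dots> \<le> lp_norm p (\<lambda>\<tau>. d (u \<tau>) (v \<tau>)) T"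
    by (rule lp_norm_mono_set[OF assms(1) \<rho>(2)])
  finally show ?thesis .
qed

section \<open>The spaces \<open>Dbar\<close> and \<open>Dfin\<close>\<close>

lemma lp_norm_setdist_le_Wp_fzero:
  assumes "1 \<le> p"
  shows "lp_norm p (\<lambda>i. setdist_e d (x i) A) I \<le> Wp d A p (I, x) fzero"
  unfolding Wp_def
proof (rule INF_greatest)
  fix m assume "m \<in> {m. is_matching A (I, x) fzero m}"
  then obtain K \<phi> z w where m: "m = (K, \<phi>, z, w)" and im: "is_matching A (I, x) ({}, \<lambda>_. undefined) (K, \<phi>, z, w)"
    by (cases m) (auto simp: fzero_def)
  then have K: "K = {}" and zA: "\<And>i. i \<in> I \<Longrightarrow> z i \<in> A"
    by (auto simp: is_matching_def)
  have "pcost d p (I, x) fzero m = lp_norm p (\<lambda>i. d (x i) (z i)) I"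
    using K by (simp add: m fzero_def pcost_eq_lp_norm match_index_def lp_norm_reindex o_def
        match_src_def match_tgt_def)
  then show "lp_norm p (\<lambda>i. setdist_e d (x i) A) I \<le> pcost d p (I, x) fzero m"
    using zA by (simp add: lp_norm_mono[OF assms] setdist_e_le)
qed

lemma Wp_fzero_eq:
  assumes "1 \<le> p" "dist_minimizing d A" "\<And>i. i \<in> I \<Longrightarrow> setdist_e d (x i) A < \<infinity>"
  shows "Wp d A p (I, x) fzero = lp_norm p (\<lambda>i. setdist_e d (x i) A) I"
proof (rule antisym)
  have "represents A I (\<lambda>i. nearest d A (x i)) ({}, \<lambda>_. undefined)"
    using represents_fzero[of I "\<lambda>i. nearest d A (x i)" A] nearest(1)[OF assms(2,3)]
    by (simp add: fzero_def)
  then have "Wp d A p (I, x) fzero \<le> lp_norm p (\<lambda>i. d (x i) (nearest d A (x i))) I"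
    unfolding fzero_def by (rule Wp_le_lp_norm_represents[OF assms(1) represents_self])
  also have "\<dots> = lp_norm p (\<lambda>i. setdist_e d (x i) A) I"
    using nearest(2)[OF assms(2,3)] by (simp cong: lp_norm_cong)
  finally show "Wp d A p (I, x) fzero \<le> lp_norm p (\<lambda>i. setdist_e d (x i) A) I" .
qed (rule lp_norm_setdist_le_Wp_fzero[OF assms(1)])

lemma represents_finite_image:
  assumes "represents A T u \<alpha>" "finite {\<tau>\<in>T. P (u \<tau>)}"
  shows "finite {i\<in>fst \<alpha>. P (snd \<alpha> i)}"
proof -
  obtain T\<^sub>0 e where T\<^sub>0: "T\<^sub>0 \<subseteq> T" "bij_betw e T\<^sub>0 (fst \<alpha>)" "\<And>\<tau>. \<tau> \<in> T\<^sub>0 \<Longrightarrow> snd \<alpha> (e \<tau>) = u \<tau>"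
    using assms(1) by (auto elim: representsE)
  have "{i\<in>fst \<alpha>. P (snd \<alpha> i)} \<subseteq> e ` {\<tau>\<in>T. P (u \<tau>)}"
  proof
    fix i assume i: "i \<in> {i\<in>fst \<alpha>. P (snd \<alpha> i)}"
    then obtain \<tau> where "\<tau> \<in> T\<^sub>0" "i = e \<tau>"
      using T\<^sub>0(2) by (auto simp: bij_betw_def)
    then show "i \<in> e ` {\<tau>\<in>T. P (u \<tau>)}" using i T\<^sub>0(1,3) by auto
  qed
  then show ?thesis using assms(2) finite_surj by blast
qed

lemma represents_finite_setdist_ge:
  assumes "metric_on d" "represents A T u \<alpha>" "0 < c"
    and "finite {i\<in>fst \<alpha>. c \<le> setdist_e d (snd \<alpha> i) A}"
  shows "finite {\<tau>\<in>T. c \<le> setdist_e d (u \<tau>) A}"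
proof -
  obtain T\<^sub>0 e where T\<^sub>0: "bij_betw e T\<^sub>0 (fst \<alpha>)" "\<And>\<tau>. \<tau> \<in> T\<^sub>0 \<Longrightarrow> snd \<alpha> (e \<tau>) = u \<tau>"
    "\<And>\<tau>. \<tau> \<in> T - T\<^sub>0 \<Longrightarrow> u \<tau> \<in> A"
    using assms(2) by (auto elim: representsE)
  have "{\<tau>\<in>T. c \<le> setdist_e d (u \<tau>) A} \<subseteq> e -` {i\<in>fst \<alpha>. c \<le> setdist_e d (snd \<alpha> i) A} \<inter> T\<^sub>0"
  proof
    fix \<tau> assume \<tau>: "\<tau> \<in> {\<tau>\<in>T. c \<le> setdist_e d (u \<tau>) A}"
    then have "u \<tau> \<notin> A" using assms(1,3) setdist_e_eq_0 by fastforce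
    then have "\<tau> \<in> T\<^sub>0" using \<tau> T\<^sub>0(3) by blast
    then show "\<tau> \<in> e -` {i\<in>fst \<alpha>. c \<le> setdist_e d (snd \<alpha> i) A} \<inter> T\<^sub>0"
      using \<tau> T\<^sub>0(1,2) by (auto simp: bij_betw_def)
  qed
  moreover have "finite (e -` {i\<in>fst \<alpha>. c \<le> setdist_e d (snd \<alpha> i) A} \<inter> T\<^sub>0)"
    using T\<^sub>0(1) assms(4) by (intro finite_vimage_IntI) (auto simp: bij_betw_def)
  ultimately show ?thesis by (rule finite_subset)
qed

lemma lp_norm_setdist_represents:
  assumes "1 \<le> p" "metric_on d" "represents A T u \<alpha>"
  shows "lp_norm p (\<lambda>\<tau>. setdist_e d (u \<tau>) A) {\<tau>\<in>T. P (u \<tau>)}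
    = lp_norm p (\<lambda>i. setdist_e d (snd \<alpha> i) A) {i\<in>fst \<alpha>. P (snd \<alpha> i)}"
proof -
  obtain T\<^sub>0 e where T\<^sub>0: "T\<^sub>0 \<subseteq> T" "bij_betw e T\<^sub>0 (fst \<alpha>)" "\<And>\<tau>. \<tau> \<in> T\<^sub>0 \<Longrightarrow> snd \<alpha> (e \<tau>) = u \<tau>"
    "\<And>\<tau>. \<tau> \<in> T - T\<^sub>0 \<Longrightarrow> u \<tau> \<in> A"
    using assms(3) by (auto elim: representsE)
  define S where "S = {\<tau>\<in>T. P (u \<tau>)}"
  have "lp_norm p (\<lambda>\<tau>. setdist_e d (u \<tau>) A) S = lp_norm p (\<lambda>\<tau>. setdist_e d (u \<tau>) A) (S \<inter> T\<^sub>0)"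
    using T\<^sub>0(4) setdist_e_eq_0[OF assms(2)] by (intro lp_norm_zero_outside[OF assms(1)]) (auto simp: S_def)
  also have "\<dots> = lp_norm p ((\<lambda>i. setdist_e d (snd \<alpha> i) A) \<circ> e) (S \<inter> T\<^sub>0)"
    using T\<^sub>0(3) by (intro lp_norm_cong) simp
  also have "\<dots> = lp_norm p (\<lambda>i. setdist_e d (snd \<alpha> i) A) (e ` (S \<inter> T\<^sub>0))"
    using inj_on_subset[OF bij_betw_imp_inj_on[OF T\<^sub>0(2)] Int_lower2] by (rule lp_norm_reindex[symmetric])
  also have "e ` (S \<inter> T\<^sub>0) = {i\<in>fst \<alpha>. P (snd \<alpha> i)}"
  proof (intro equalityI subsetI)
    fix i assume "i \<in> e ` (S \<inter> T\<^sub>0)"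
    then show "i \<in> {i\<in>fst \<alpha>. P (snd \<alpha> i)}"
      using T\<^sub>0(2,3) by (auto simp: S_def bij_betw_def)
  next
    fix i assume i: "i \<in> {i\<in>fst \<alpha>. P (snd \<alpha> i)}"
    then obtain \<tau> where "\<tau> \<in> T\<^sub>0" "i = e \<tau>"
      using T\<^sub>0(2) by (auto simp: bij_betw_def)
    then show "i \<in> e ` (S \<inter> T\<^sub>0)" using i T\<^sub>0(1,3) by (auto simp: S_def)
  qed
  finally show ?thesis by (simp add: S_def)
qed

lemma ennreal_pos_ge_real:
  assumes "0 < c"
  obtains \<delta> :: real where "0 < \<delta>" "ennreal \<delta> \<le> c"
proof (cases c rule: ennreal_cases)
  case (real r)
  then show ?thesis using assms that[of r] by simp
next
  case top
  then show ?thesis using that[of 1] by simp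
qed

lemma Dbar_subset_fsums: "Dbar d A p \<subseteq> fsums A"
  by (auto simp: Dbar_def)

lemma Dbar_infty_iff:
  "\<alpha> \<in> Dbar d A \<infinity> \<longleftrightarrow>
    \<alpha> \<in> fsums A \<and> (\<forall>\<delta>>0. finite {i\<in>fst \<alpha>. ennreal \<delta> \<le> setdist_e d (snd \<alpha> i) A})"
proof -
  have far: "fst (u_part d A c \<alpha>) = {i\<in>fst \<alpha>. c \<le> setdist_e d (snd \<alpha> i) A}" for c
    by (auto simp: u_part_def thick_def)
  have "finite {i\<in>fst \<alpha>. c \<le> setdist_e d (snd \<alpha> i) A}"
    if fin: "\<forall>\<delta>>0. finite {i\<in>fst \<alpha>. ennreal \<delta> \<le> setdist_e d (snd \<alpha> i) A}" and "c > 0" for c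
  proof -
    obtain \<delta> where "\<delta> > 0" "ennreal \<delta> \<le> c" using ennreal_pos_ge_real[OF \<open>c > 0\<close>] .
    then show ?thesis
      using fin by (auto elim!: rev_finite_subset intro: order_trans)
  qed
  then show ?thesis by (auto simp: Dbar_def far)
qed

lemma Dbar_finite_p_iff:
  assumes "1 \<le> p" "p \<noteq> \<infinity>" "dist_minimizing d A"
  shows "\<alpha> \<in> Dbar d A p \<longleftrightarrow> \<alpha> \<in> fsums A \<and> finite {i\<in>fst \<alpha>. setdist_e d (snd \<alpha> i) A = \<infinity>}
    \<and> lp_norm p (\<lambda>i. setdist_e d (snd \<alpha> i) A) {i\<in>fst \<alpha>. setdist_e d (snd \<alpha> i) A < \<infinity>} < \<infinity>"
proof -
  have u: "fst (u_part d A top \<alpha>) = {i\<in>fst \<alpha>. setdist_e d (snd \<alpha> i) A = top}"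
    by (auto simp: u_part_def thick_def not_less top_unique)
  have l: "l_part d A top \<alpha> = ({i\<in>fst \<alpha>. setdist_e d (snd \<alpha> i) A < top}, snd \<alpha>)" if "\<alpha> \<in> fsums A"
    using that by (auto simp: l_part_def thick_def fsums_def)
  show ?thesis
    using assms Wp_fzero_eq[OF assms(1,3), of "{i\<in>fst \<alpha>. setdist_e d (snd \<alpha> i) A < \<infinity>}" "snd \<alpha>"]
    by (auto simp: Dbar_def u l)
qed

lemma lp_norm_less_top_finite_ge:
  assumes "1 \<le> p" "p \<noteq> \<infinity>" "lp_norm p f S < \<infinity>" "0 < c"
  shows "finite {k\<in>S. c \<le> f k}"
proof (rule ccontr)
  define q where "q = real_of_ereal p"
  have q: "q \<ge> 1" using real_of_ereal_ge_1[OF assms(1,2)] by (simp add: q_def)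
  assume "infinite {k\<in>S. c \<le> f k}"
  then have "infsum (\<lambda>k. enn_powr (f k) q) {k\<in>S. c \<le> f k} = \<infinity>"
  proof (rule infsum_superconst_infinite_ennreal[rotated 2])
    show "0 < enn_powr c q"
      using assms(4) by (auto simp: enn_powr_def enn2real_eq_0_iff less_top)
  qed (use q in \<open>auto intro: enn_powr_mono\<close>)
  moreover have "infsum (\<lambda>k. enn_powr (f k) q) {k\<in>S. c \<le> f k} \<le> infsum (\<lambda>k. enn_powr (f k) q) S"
    by (rule infsum_ennreal_mono_set) auto
  moreover have "infsum (\<lambda>k. enn_powr (f k) q) S < \<infinity>"
    using assms(3) lp_norm_finite_eq[OF assms(1,2)] unfolding q_def by blast
  ultimately show False by (simp add: top_unique)
qed

lemma Dbar_finite_setdist_ge: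
  assumes "1 \<le> p" "dist_minimizing d A" "\<alpha> \<in> Dbar d A p" "0 < c"
  shows "finite {i\<in>fst \<alpha>. c \<le> setdist_e d (snd \<alpha> i) A}"
proof (cases "p = \<infinity>")
  case True
  obtain \<delta> where \<delta>: "\<delta> > 0" "ennreal \<delta> \<le> c" using ennreal_pos_ge_real[OF assms(4)] .
  have "finite {i\<in>fst \<alpha>. ennreal \<delta> \<le> setdist_e d (snd \<alpha> i) A}"
    using assms(3) True \<delta>(1) by (simp add: Dbar_infty_iff)
  then show ?thesis
    using \<delta>(2) by (auto elim!: rev_finite_subset intro: order_trans)
next
  case False
  let ?sd = "\<lambda>i. setdist_e d (snd \<alpha> i) A"
  have "{i\<in>fst \<alpha>. c \<le> ?sd i} \<subseteq> {i\<in>fst \<alpha>. ?sd i = \<infinity>} \<union> {i\<in>{i\<in>fst \<alpha>. ?sd i < \<infinity>}. c \<le> ?sd i}"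
    by (auto simp: less_top)
  moreover have "finite {i\<in>{i\<in>fst \<alpha>. ?sd i < \<infinity>}. c \<le> ?sd i}"
    using assms False Dbar_finite_p_iff[OF assms(1) False assms(2)]
    by (intro lp_norm_less_top_finite_ge[OF assms(1) False]) auto
  ultimately show ?thesis
    using assms(3) Dbar_finite_p_iff[OF assms(1) False assms(2)] by (auto elim: finite_subset)
qed

lemma Dfin_subset_Dbar:
  assumes "1 \<le> p" "dist_minimizing d A"
  shows "Dfin A \<subseteq> Dbar d A p"
proof
  fix \<alpha> assume \<alpha>: "\<alpha> \<in> Dfin A"
  then have fin: "finite (fst \<alpha>)" and fs: "\<alpha> \<in> fsums A" by (auto simp: Dfin_def)
  show "\<alpha> \<in> Dbar d A p"
  proof (cases "p = \<infinity>")
    case True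
    then show ?thesis using fin fs by (simp add: Dbar_infty_iff)
  next
    case False
    have "lp_norm p (\<lambda>i. setdist_e d (snd \<alpha> i) A) {i\<in>fst \<alpha>. setdist_e d (snd \<alpha> i) A < \<infinity>} < \<infinity>"
      using fin by (intro lp_norm_finite_less_top[OF assms(1)]) auto
    then show ?thesis
      using fin fs by (simp add: Dbar_finite_p_iff[OF assms(1) False assms(2)])
  qed
qed

lemma lp_norm_add_less_top:
  assumes "1 \<le> p" "lp_norm p f S < \<infinity>" "lp_norm p g S < \<infinity>"
  shows "lp_norm p (\<lambda>k. f k + g k) S < \<infinity>"
proof (cases "p = \<infinity>")
  case True
  have "(SUP k\<in>S. f k + g k) \<le> (SUP k\<in>S. f k) + (SUP k\<in>S. g k)"
    by (intro SUP_least add_mono SUP_upper)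
  then show ?thesis
    using assms True by (simp add: lp_norm_def ennreal_add_less_top order_le_less_trans)
next
  case False
  define q where "q = real_of_ereal p"
  have q: "q \<ge> 1" using real_of_ereal_ge_1[OF assms(1) False] by (simp add: q_def)
  have "infsum (\<lambda>k. enn_powr (f k + g k) q) S
      \<le> infsum (\<lambda>k. ennreal (2 powr q) * (enn_powr (f k) q + enn_powr (g k) q)) S"
    using q by (intro infsum_mono enn_powr_add_le) auto
  also have "\<dots> = ennreal (2 powr q) * (infsum (\<lambda>k. enn_powr (f k) q) S + infsum (\<lambda>k. enn_powr (g k) q) S)"
    by (simp add: infsum_ennreal_mult_left infsum_add)
  also have "\<dots> < \<infinity>"
  proof -
    have "infsum (\<lambda>k. enn_powr (f k) q) S < \<infinity>" "infsum (\<lambda>k. enn_powr (g k) q) S < \<infinity>"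
      using assms(2,3) lp_norm_finite_eq[OF assms(1) False] unfolding q_def by blast+
    then show ?thesis by (simp add: ennreal_mult_less_top ennreal_add_less_top)
  qed
  finally show ?thesis using lp_norm_finite_eq[OF assms(1) False] unfolding q_def by blast
qed

lemma Dbar_of_represents_near:
  assumes p: "1 \<le> p" "p \<noteq> \<infinity>" and md: "metric_on d" and dm: "dist_minimizing d A"
    and \<alpha>: "\<alpha> \<in> Dbar d A p" and \<beta>: "\<beta> \<in> fsums A"
    and a: "represents A T a \<alpha>" and u: "represents A T u \<beta>"
    and L: "\<And>\<tau>. \<tau> \<in> T \<Longrightarrow> d (a \<tau>) (u \<tau>) \<le> L \<tau>" "lp_norm p L T < \<infinity>"
  shows "\<beta> \<in> Dbar d A p"
proof -
  let ?sd = "\<lambda>z. setdist_e d z A"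
  have Lfin: "L \<tau> < \<infinity>" if "\<tau> \<in> T" for \<tau>
    using le_lp_norm[OF p(1) that, of L] L(2) by simp
  have sd_u: "?sd (u \<tau>) \<le> ?sd (a \<tau>) + L \<tau>" and sd_a: "?sd (a \<tau>) \<le> L \<tau> + ?sd (u \<tau>)" if "\<tau> \<in> T" for \<tau>
    using setdist_e_triangle[OF md, of "u \<tau>" A "a \<tau>"] setdist_e_triangle[OF md, of "a \<tau>" A "u \<tau>"]
      L(1)[OF that] metric_onD(2)[OF md, of "a \<tau>" "u \<tau>"]
    by (auto simp: add.commute intro: order_trans add_right_mono add_left_mono)
  have \<alpha>': "finite {i\<in>fst \<alpha>. ?sd (snd \<alpha> i) = \<infinity>}"
    "lp_norm p (\<lambda>i. ?sd (snd \<alpha> i)) {i\<in>fst \<alpha>. ?sd (snd \<alpha> i) < \<infinity>} < \<infinity>"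
    using \<alpha> Dbar_finite_p_iff[OF p dm] by auto
  have "finite {\<tau>\<in>T. \<infinity> \<le> ?sd (a \<tau>)}"
    using \<alpha>'(1) by (intro represents_finite_setdist_ge[OF md a]) (auto simp: top_unique)
  moreover have "{\<tau>\<in>T. ?sd (u \<tau>) = \<infinity>} \<subseteq> {\<tau>\<in>T. \<infinity> \<le> ?sd (a \<tau>)}"
    using sd_u Lfin by (fastforce simp: top_unique ennreal_add_eq_top)
  ultimately have far: "finite {i\<in>fst \<beta>. ?sd (snd \<beta> i) = \<infinity>}"
    by (intro represents_finite_image[OF u]) (rule finite_subset)
  have "lp_norm p (\<lambda>i. ?sd (snd \<beta> i)) {i\<in>fst \<beta>. ?sd (snd \<beta> i) < \<infinity>}
      = lp_norm p (\<lambda>\<tau>. ?sd (u \<tau>)) {\<tau>\<in>T. ?sd (u \<tau>) < \<infinity>}"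
    by (rule lp_norm_setdist_represents[OF p(1) md u, symmetric])
  also have "\<dots> \<le> lp_norm p (\<lambda>\<tau>. ?sd (a \<tau>) + L \<tau>) {\<tau>\<in>T. ?sd (u \<tau>) < \<infinity>}"
    using sd_u by (intro lp_norm_mono[OF p(1)]) auto
  also have "\<dots> \<le> lp_norm p (\<lambda>\<tau>. ?sd (a \<tau>) + L \<tau>) {\<tau>\<in>T. ?sd (a \<tau>) < \<infinity>}"
  proof (intro lp_norm_mono_set[OF p(1)] subsetI CollectI conjI)
    fix \<tau> assume \<tau>: "\<tau> \<in> {\<tau>\<in>T. ?sd (u \<tau>) < \<infinity>}"
    then show "\<tau> \<in> T" by simp
    show "?sd (a \<tau>) < \<infinity>"
    proof (rule order_le_less_trans)
      show "?sd (a \<tau>) \<le> L \<tau> + ?sd (u \<tau>)" using \<tau> sd_a by simp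
      show "L \<tau> + ?sd (u \<tau>) < \<infinity>" using \<tau> Lfin by (simp add: ennreal_add_less_top)
    qed
  qed
  also have "\<dots> < \<infinity>"
  proof (rule lp_norm_add_less_top[OF p(1)])
    show "lp_norm p (\<lambda>\<tau>. ?sd (a \<tau>)) {\<tau>\<in>T. ?sd (a \<tau>) < \<infinity>} < \<infinity>"
      using \<alpha>'(2) lp_norm_setdist_represents[OF p(1) md a, of "\<lambda>z. ?sd z < \<infinity>"] by simp
    show "lp_norm p L {\<tau>\<in>T. ?sd (a \<tau>) < \<infinity>} < \<infinity>"
      using lp_norm_mono_set[OF p(1), of "{\<tau>\<in>T. ?sd (a \<tau>) < \<infinity>}" T L] L(2) by auto
  qed
  finally show ?thesis using \<beta> far Dbar_finite_p_iff[OF p dm] by auto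
qed

lemma Dbar_infty_of_represents_between:
  assumes md: "metric_on d" and \<alpha>: "\<alpha> \<in> Dbar d A \<infinity>" and \<beta>: "\<beta> \<in> Dbar d A \<infinity>" and \<gamma>: "\<gamma> \<in> fsums A"
    and a: "represents A T a \<alpha>" and b: "represents A T b \<beta>" and u: "represents A T u \<gamma>"
    and L: "\<And>\<tau>. \<tau> \<in> T \<Longrightarrow> d (a \<tau>) (u \<tau>) \<le> L \<tau>"
      "\<And>\<tau>. \<tau> \<in> T \<Longrightarrow> L \<tau> \<le> max (setdist_e d (a \<tau>) A) (setdist_e d (b \<tau>) A)"
  shows "\<gamma> \<in> Dbar d A \<infinity>"
proof -
  let ?sd = "\<lambda>z. setdist_e d z A"
  have "finite {i\<in>fst \<gamma>. ennreal \<delta> \<le> ?sd (snd \<gamma> i)}" if "\<delta> > 0" for \<delta>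
  proof -
    have "{\<tau>\<in>T. ennreal \<delta> \<le> ?sd (u \<tau>)}
        \<subseteq> {\<tau>\<in>T. ennreal (\<delta>/2) \<le> ?sd (a \<tau>)} \<union> {\<tau>\<in>T. ennreal (\<delta>/2) \<le> ?sd (b \<tau>)}"
    proof (intro subsetI CollectI UnCI conjI)
      fix \<tau> assume \<tau>: "\<tau> \<in> {\<tau>\<in>T. ennreal \<delta> \<le> ?sd (u \<tau>)}" and nb: "\<tau> \<notin> {\<tau>\<in>T. ennreal (\<delta>/2) \<le> ?sd (b \<tau>)}"
      show "\<tau> \<in> T" using \<tau> by simp
      show "ennreal (\<delta>/2) \<le> ?sd (a \<tau>)"
      proof (rule ccontr)
        assume "\<not> ennreal (\<delta>/2) \<le> ?sd (a \<tau>)"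
        then have "?sd (a \<tau>) + L \<tau> < ennreal (\<delta>/2) + ennreal (\<delta>/2)"
          using \<tau> nb L(2)[of \<tau>] by (intro add_strict_mono) (auto simp: not_le le_less_trans)
        also have "\<dots> = ennreal \<delta>"
          using \<open>\<delta> > 0\<close> by (simp flip: ennreal_plus)
        finally have "?sd (a \<tau>) + L \<tau> < ennreal \<delta>" .
        moreover have "?sd (u \<tau>) \<le> ?sd (a \<tau>) + L \<tau>"
          using setdist_e_triangle[OF md, of "u \<tau>" A "a \<tau>"] L(1)[of \<tau>] \<tau> metric_onD(2)[OF md, of "a \<tau>" "u \<tau>"]
          by (auto simp: add.commute intro: order_trans add_right_mono)
        moreover have "ennreal \<delta> \<le> ?sd (u \<tau>)" using \<tau> by simp
        ultimately show False by (meson leD order_trans)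
      qed
    qed
    moreover have "finite {\<tau>\<in>T. ennreal (\<delta>/2) \<le> ?sd (a \<tau>)}" "finite {\<tau>\<in>T. ennreal (\<delta>/2) \<le> ?sd (b \<tau>)}"
      using \<alpha> \<beta> \<open>\<delta> > 0\<close>
      by (auto intro!: represents_finite_setdist_ge[OF md a] represents_finite_setdist_ge[OF md b]
          simp: Dbar_infty_iff)
    ultimately show ?thesis
      by (intro represents_finite_image[OF u]) (auto elim: finite_subset)
  qed
  then show ?thesis using \<gamma> by (simp add: Dbar_infty_iff)
qed

lemma Dfin_of_represents: "represents A T u \<alpha> \<Longrightarrow> finite T \<Longrightarrow> \<alpha> \<in> fsums A \<Longrightarrow> \<alpha> \<in> Dfin A"
  using represents_finite_image[of A T u \<alpha> "\<lambda>_. True"] by (simp add: Dfin_def)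

section \<open>Paths of bounded speed and constant-speed geodesics\<close>

lemma partitions01_mono:
  assumes "(n, t) \<in> partitions01" "k \<le> l" "l \<le> n"
  shows "t k \<le> t l"
  using assms(2,3)
proof (induction l rule: dec_induct)
  case (step l)
  then show ?case using assms(1) by (auto simp: partitions01_def intro: order_trans)
qed simp

lemma partitions01_bounds:
  assumes "(n, t) \<in> partitions01" "k \<le> n"
  shows "0 \<le> t k" "t k \<le> 1"
  using partitions01_mono[OF assms(1), of 0 k] partitions01_mono[OF assms(1), of k n] assms
  by (auto simp: partitions01_def)

lemma path_length_le_of_lipschitz:
  assumes lip: "\<And>s t. s \<in> {0..1} \<Longrightarrow> t \<in> {0..1} \<Longrightarrow> D (\<gamma> s) (\<gamma> t) \<le> ennreal \<bar>s - t\<bar> * W"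
  shows "path_length D \<gamma> \<le> W"
  unfolding path_length_def
proof (rule SUP_least, clarify)
  fix n t assume P: "(n, t) \<in> partitions01"
  have step: "t (k - 1) \<le> t k" "t (k - 1) \<in> {0..1}" "t k \<in> {0..1}" if "k \<in> {1..n}" for k
    using that partitions01_mono[OF P, of "k - 1" k] partitions01_bounds[OF P, of "k - 1"]
      partitions01_bounds[OF P, of k] by auto
  have "(\<Sum>k\<in>{1..n}. D (\<gamma> (t (k - 1))) (\<gamma> (t k))) \<le> (\<Sum>k\<in>{1..n}. ennreal (t k - t (k - 1)) * W)"
    using step lip by (intro sum_mono) (metis abs_of_nonpos diff_le_0_iff_le minus_diff_eq)
  also have "\<dots> = (\<Sum>k\<in>{1..n}. ennreal (t k - t (k - 1))) * W"
    by (simp add: sum_distrib_right)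
  also have "(\<Sum>k\<in>{1..n}. ennreal (t k - t (k - 1))) = ennreal (\<Sum>k\<in>{1..n}. t k - t (k - 1))"
    using step by (intro sum_ennreal) auto
  also have "(\<Sum>k\<in>{1..n}. t k - t (k - 1)) = t n - t 0"
    by (induction n) (auto simp: sum.cl_ivl_Suc)
  finally show "(\<Sum>k\<in>{1..fst (n, t)}. D (\<gamma> (snd (n, t) (k - 1))) (\<gamma> (snd (n, t) k))) \<le> W"
    using P by (simp add: partitions01_def)
qed

lemma sum_le_path_length:
  assumes "(n, t) \<in> partitions01"
  shows "(\<Sum>k\<in>{1..n}. D (\<gamma> (t (k - 1))) (\<gamma> (t k))) \<le> path_length D \<gamma>"
  using SUP_upper[OF assms, of "\<lambda>P. \<Sum>k\<in>{1..fst P}. D (\<gamma> (snd P (k - 1))) (\<gamma> (snd P k))"]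
  by (simp add: path_length_def)

lemma dist_le_path_length: "D (\<gamma> 0) (\<gamma> 1) \<le> path_length D \<gamma>"
  using sum_le_path_length[of 1 "\<lambda>k. if k = 0 then 0 else 1" D \<gamma>] by (simp add: partitions01_def)

lemma three_point_le_path_length:
  assumes "0 \<le> s" "s \<le> s'" "s' \<le> 1"
  shows "D (\<gamma> 0) (\<gamma> s) + D (\<gamma> s) (\<gamma> s') + D (\<gamma> s') (\<gamma> 1) \<le> path_length D \<gamma>"
proof -
  define t where "t k = (if k = 0 then 0 else if k = 1 then s else if k = 2 then s' else (1::real))" for k :: nat
  have "(3, t) \<in> partitions01"
    using assms by (auto simp: partitions01_def t_def less_Suc_eq numeral_3_eq_3)
  moreover have "{1..3::nat} = {1, 2, 3}" by auto
  ultimately show ?thesis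
    using sum_le_path_length[of 3 t D \<gamma>] by (simp add: t_def add.assoc)
qed

lemma path_cont_of_lipschitz:
  assumes "W < \<infinity>" and lip: "\<And>s t. s \<in> {0..1} \<Longrightarrow> t \<in> {0..1} \<Longrightarrow> D (\<gamma> s) (\<gamma> t) \<le> ennreal \<bar>s - t\<bar> * W"
  shows "path_cont D \<gamma>"
  unfolding path_cont_def
proof (intro ballI allI impI)
  fix t e :: real assume t: "t \<in> {0..1}" and e: "0 < e"
  obtain W' where W': "W = ennreal W'" "W' \<ge> 0" using assms(1) by (cases W rule: ennreal_cases) auto
  show "\<exists>\<delta>>0. \<forall>s\<in>{0..1}. \<bar>s - t\<bar> < \<delta> \<longrightarrow> D (\<gamma> s) (\<gamma> t) < ennreal e"
  proof (intro exI[of _ "e / (W' + 1)"] conjI ballI impI)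
    show "e / (W' + 1) > 0" using e W' by simp
    fix s assume s: "s \<in> {0..1}" and st: "\<bar>s - t\<bar> < e / (W' + 1)"
    have "\<bar>s - t\<bar> * W' \<le> e / (W' + 1) * W'" using st W' by (intro mult_right_mono) auto
    also have "\<dots> < e" using e W' by (simp add: field_simps)
    finally have "ennreal (\<bar>s - t\<bar> * W') < ennreal e" using e by (intro ennreal_lessI)
    then show "D (\<gamma> s) (\<gamma> t) < ennreal e"
      using lip[OF s t] W' by (simp add: ennreal_mult)
  qed
qed

lemma lipschitz_path_is_geodesic:
  assumes "D (\<gamma> 0) (\<gamma> 1) < \<infinity>" "W \<le> D (\<gamma> 0) (\<gamma> 1)"
    and lip: "\<And>s t. s \<in> {0..1} \<Longrightarrow> t \<in> {0..1} \<Longrightarrow> D (\<gamma> s) (\<gamma> t) \<le> ennreal \<bar>s - t\<bar> * W"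
  shows "path_cont D \<gamma>" "path_length D \<gamma> = D (\<gamma> 0) (\<gamma> 1)"
proof -
  show "path_cont D \<gamma>"
    using assms(1,2) lip by (intro path_cont_of_lipschitz[of W]) auto
  show "path_length D \<gamma> = D (\<gamma> 0) (\<gamma> 1)"
    using path_length_le_of_lipschitz[of D \<gamma> W, OF lip] assms(2) dist_le_path_length[of D \<gamma>] by simp
qed

lemma geodesic_dist_eq_diff:
  assumes md: "metric_on d" and g: "g 0 = x" "g 1 = y" "path_length d g = d x y" "d x y < \<infinity>"
    and s: "0 \<le> s" "s \<le> s'" "s' \<le> 1"
  shows "d x (g s) < \<infinity>" "enn2real (d x (g s)) \<le> enn2real (d x (g s'))"
    "d (g s) (g s') = ennreal (enn2real (d x (g s')) - enn2real (d x (g s)))"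
proof -
  have sum: "d x (g s) + d (g s) (g s') + d (g s') y \<le> d x y"
    using three_point_le_path_length[OF s, of d g] g by simp
  then have "d x (g s) + d (g s) (g s') + d (g s') y < \<infinity>"
    using g(4) by (rule le_less_trans)
  then have fin: "d x (g s) < \<infinity>" "d (g s) (g s') < \<infinity>" "d (g s') y < \<infinity>"
    by (simp_all add: ennreal_add_less_top)
  then show "d x (g s) < \<infinity>" by simp
  have "d x (g s') < \<infinity>"
    using metric_onD(3)[OF md, of x "g s'" "g s"] fin(1,2) by (simp add: ennreal_add_less_top le_less_trans)
  define a b c e L where "a = enn2real (d x (g s))" "b = enn2real (d (g s) (g s'))" "c = enn2real (d (g s') y)"
    "e = enn2real (d x (g s'))" "L = enn2real (d x y)"
  have abce: "d x (g s) = ennreal a" "d (g s) (g s') = ennreal b" "d (g s') y = ennreal c"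
      "d x (g s') = ennreal e" "d x y = ennreal L" "a \<ge> 0" "b \<ge> 0" "c \<ge> 0" "e \<ge> 0" "L \<ge> 0"
    using fin \<open>d x (g s') < \<infinity>\<close> g(4) by (simp_all add: a_b_c_e_L_def)
  have "a + b + c \<le> L"
    using sum abce by (simp add: ennreal_plus[symmetric] del: ennreal_plus)
  moreover have "L \<le> e + c" "e \<le> a + b"
    using metric_onD(3)[OF md, of x y "g s'"] metric_onD(3)[OF md, of x "g s'" "g s"] abce
    by (simp_all add: ennreal_plus[symmetric] del: ennreal_plus)
  ultimately have "b = e - a" by linarith
  then have "a \<le> e" "d (g s) (g s') = ennreal (e - a)"
    using abce by auto
  then show "enn2real (d x (g s)) \<le> enn2real (d x (g s'))"
    "d (g s) (g s') = ennreal (enn2real (d x (g s')) - enn2real (d x (g s)))"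
    by (simp_all only: a_b_c_e_L_def)
qed

lemma constant_speed_geodesic:
  assumes md: "metric_on d" and gs: "geodesic_space UNIV d" and fin: "d x y < \<infinity>"
  obtains h where "h 0 = x" "h 1 = y" "\<And>s t. s \<in> {0..1} \<Longrightarrow> t \<in> {0..1} \<Longrightarrow> d (h s) (h t) = ennreal \<bar>s - t\<bar> * d x y"
proof -
  obtain g where g: "g 0 = x" "g 1 = y" "path_cont d g" "path_length d g = d x y"
    using gs fin unfolding geodesic_space_def by blast
  define L where "L = enn2real (d x y)"
  define \<phi> where "\<phi> s = enn2real (d x (g s))" for s
  have dist_g_le: "d (g s) (g s') = ennreal \<bar>\<phi> s' - \<phi> s\<bar>" if "0 \<le> s" "s \<le> s'" "s' \<le> 1" for s s'
    using geodesic_dist_eq_diff[OF md g(1,2,4) fin that] by (simp add: \<phi>_def)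
  have dist_g: "d (g s) (g s') = ennreal \<bar>\<phi> s' - \<phi> s\<bar>" if "s \<in> {0..1}" "s' \<in> {0..1}" for s s'
  proof (cases "s \<le> s'")
    case True
    then show ?thesis using dist_g_le that by simp
  next
    case False
    then show ?thesis
      using dist_g_le[of s' s] that metric_onD(2)[OF md, of "g s" "g s'"] by (simp add: abs_minus_commute)
  qed
  have "continuous_on {0..1} \<phi>"
    unfolding continuous_on_iff
  proof (intro ballI allI impI)
    fix t e :: real assume t: "t \<in> {0..1}" and e: "0 < e"
    obtain \<delta> where \<delta>: "\<delta> > 0" "\<And>s. s \<in> {0..1} \<Longrightarrow> \<bar>s - t\<bar> < \<delta> \<Longrightarrow> d (g s) (g t) < ennreal e"
      using g(3) t e unfolding path_cont_def by blast
    show "\<exists>\<delta>>0. \<forall>s\<in>{0..1}. dist s t < \<delta> \<longrightarrow> dist (\<phi> s) (\<phi> t) < e"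
    proof (intro exI[of _ \<delta>] conjI ballI impI)
      fix s assume "s \<in> {0..1}" "dist s t < \<delta>"
      then have "ennreal \<bar>\<phi> t - \<phi> s\<bar> < ennreal e"
        using \<delta>(2)[of s] dist_g[of s t] t by (simp add: dist_real_def)
      then show "dist (\<phi> s) (\<phi> t) < e"
        using e by (simp add: dist_real_def abs_minus_commute ennreal_less_iff)
    qed (rule \<delta>(1))
  qed
  moreover have "\<phi> 0 = 0" "\<phi> 1 = L"
    using metric_onD(1)[OF md] g by (simp_all add: \<phi>_def L_def)
  ultimately have ex: "\<exists>s. s \<in> {0..1} \<and> \<phi> s = c * L" if "c \<in> {0..1}" for c
  proof -
    have "0 \<le> c * L" "c * L \<le> L" using that by (auto simp: L_def mult_left_le_one_le)
    then show ?thesis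
      using IVT'[of \<phi> 0 "c * L" 1] \<open>continuous_on {0..1} \<phi>\<close> \<open>\<phi> 0 = 0\<close> \<open>\<phi> 1 = L\<close> by auto
  qed
  define \<sigma> where "\<sigma> c = (SOME s. s \<in> {0..1} \<and> \<phi> s = c * L)" for c
  have \<sigma>: "\<sigma> c \<in> {0..1}" "\<phi> (\<sigma> c) = c * L" if "c \<in> {0..1}" for c
    using someI_ex[OF ex[OF that]] by (simp_all add: \<sigma>_def)
  define \<sigma>' where "\<sigma>' c = (if c = 0 then 0 else if c = 1 then 1 else \<sigma> c)" for c
  have \<sigma>': "\<sigma>' c \<in> {0..1}" "\<phi> (\<sigma>' c) = c * L" if "c \<in> {0..1}" for c
    using \<sigma>[OF that] \<open>\<phi> 0 = 0\<close> \<open>\<phi> 1 = L\<close> by (auto simp: \<sigma>'_def)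
  show ?thesis
  proof
    show "g (\<sigma>' 0) = x" "g (\<sigma>' 1) = y" using g by (simp_all add: \<sigma>'_def)
    fix s t :: real assume st: "s \<in> {0..1}" "t \<in> {0..1}"
    have "\<bar>t * L - s * L\<bar> = \<bar>s - t\<bar> * L"
      by (simp add: L_def abs_mult abs_minus_commute flip: left_diff_distrib)
    then have "d (g (\<sigma>' s)) (g (\<sigma>' t)) = ennreal (\<bar>s - t\<bar> * L)"
      using dist_g[OF \<sigma>'(1)[OF st(1)] \<sigma>'(1)[OF st(2)]] \<sigma>'(2) st by simp
    then show "d (g (\<sigma>' s)) (g (\<sigma>' t)) = ennreal \<bar>s - t\<bar> * d x y"
      using fin by (simp add: L_def ennreal_mult)
  qed
qed

section \<open>Interpolating along a common representation\<close>

lemma Dbar_of_represents_between: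
  assumes md: "metric_on d" and dm: "dist_minimizing d A" and p: "1 \<le> p"
    and \<alpha>: "\<alpha> \<in> Dbar d A p" and \<beta>: "\<beta> \<in> Dbar d A p" and \<gamma>: "\<gamma> \<in> fsums A"
    and a: "represents A T a \<alpha>" and b: "represents A T b \<beta>" and u: "represents A T u \<gamma>"
    and between: "\<And>\<tau>. \<tau> \<in> T \<Longrightarrow> d (a \<tau>) (u \<tau>) \<le> d (a \<tau>) (b \<tau>)"
    and fin: "lp_norm p (\<lambda>\<tau>. d (a \<tau>) (b \<tau>)) T < \<infinity>"
    and close: "\<And>\<tau>. p = \<infinity> \<Longrightarrow> \<tau> \<in> T \<Longrightarrow> d (a \<tau>) (b \<tau>) \<le> max (setdist_e d (a \<tau>) A) (setdist_e d (b \<tau>) A)"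
  shows "\<gamma> \<in> Dbar d A p"
proof (cases "p = \<infinity>")
  case True
  show ?thesis
    unfolding True
    by (rule Dbar_infty_of_represents_between[OF md \<alpha>[unfolded True] \<beta>[unfolded True] \<gamma> a b u between
          close[OF True]])
next
  case False
  show ?thesis
    by (rule Dbar_of_represents_near[OF p False md dm \<alpha> \<gamma> a u between fin])
qed

lemma constant_speed_geodesic_family:
  assumes md: "metric_on d" and gs: "geodesic_space UNIV d" and fin: "\<And>\<tau>. \<tau> \<in> T \<Longrightarrow> d (a \<tau>) (b \<tau>) < \<infinity>"
  obtains H where "\<And>\<tau>. \<tau> \<in> T \<Longrightarrow> H \<tau> 0 = a \<tau>" "\<And>\<tau>. \<tau> \<in> T \<Longrightarrow> H \<tau> 1 = b \<tau>"
    "\<And>\<tau> s t. \<tau> \<in> T \<Longrightarrow> s \<in> {0..1} \<Longrightarrow> t \<in> {0..1} \<Longrightarrow> d (H \<tau> s) (H \<tau> t) = ennreal \<bar>s - t\<bar> * d (a \<tau>) (b \<tau>)"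
proof -
  define P where "P \<tau> h \<longleftrightarrow> h 0 = a \<tau> \<and> h 1 = b \<tau> \<and>
    (\<forall>s\<in>{0..1}. \<forall>t\<in>{0..1}. d (h s) (h t) = ennreal \<bar>s - t\<bar> * d (a \<tau>) (b \<tau>))" for \<tau> and h :: "real \<Rightarrow> _"
  have "\<exists>h. P \<tau> h" if \<tau>: "\<tau> \<in> T" for \<tau>
  proof -
    obtain h where "h 0 = a \<tau>" "h 1 = b \<tau>"
      "\<And>s t. s \<in> {0..1} \<Longrightarrow> t \<in> {0..1} \<Longrightarrow> d (h s) (h t) = ennreal \<bar>s - t\<bar> * d (a \<tau>) (b \<tau>)"
      using constant_speed_geodesic[OF md gs fin[OF \<tau>]] by blast
    then show ?thesis by (auto simp: P_def)
  qed
  then have "P \<tau> (SOME h. P \<tau> h)" if "\<tau> \<in> T" for \<tau>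
    using someI_ex that by metis
  then show ?thesis
    by (intro that[of "\<lambda>\<tau>. SOME h. P \<tau> h"]) (simp_all add: P_def)
qed

definition interpolate :: "'a set \<Rightarrow> 'i::countable set \<Rightarrow> ('i \<Rightarrow> real \<Rightarrow> 'a) \<Rightarrow> real \<Rightarrow> 'a fsum" where
  "interpolate A T H t = (to_nat ` {\<tau>\<in>T. H \<tau> t \<notin> A}, \<lambda>n. H (from_nat n) t)"

lemma interpolate_in_fsums: "interpolate A T H t \<in> fsums A"
  by (auto simp: interpolate_def fsums_def)

lemma represents_interpolate: "represents A T (\<lambda>\<tau>. H \<tau> t) (interpolate A T H t)"
  unfolding represents_def interpolate_def
  by (intro exI[of _ "{\<tau>\<in>T. H \<tau> t \<notin> A}"] exI[of _ to_nat]) (auto simp: bij_betw_def inj_on_def)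

lemma geodesic_of_common_representation:
  fixes T :: "'i::countable set"
  assumes md: "metric_on d" and gs: "geodesic_space UNIV d" and dm: "dist_minimizing d A" and p: "1 \<le> p"
    and \<alpha>: "\<alpha> \<in> Dbar d A p" and \<beta>: "\<beta> \<in> Dbar d A p"
    and a: "represents A T a \<alpha>" and b: "represents A T b \<beta>"
    and W: "lp_norm p (\<lambda>\<tau>. d (a \<tau>) (b \<tau>)) T \<le> Wp d A p \<alpha> \<beta>" "Wp d A p \<alpha> \<beta> < \<infinity>"
    and close: "\<And>\<tau>. p = \<infinity> \<Longrightarrow> \<tau> \<in> T \<Longrightarrow> d (a \<tau>) (b \<tau>) \<le> max (setdist_e d (a \<tau>) A) (setdist_e d (b \<tau>) A)"
  obtains \<gamma> where "\<gamma> ` {0..1} \<subseteq> Dbar d A p" "\<gamma> 0 = \<alpha>" "\<gamma> 1 = \<beta>" "path_cont (Wp d A p) \<gamma>"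
    "path_length (Wp d A p) \<gamma> = Wp d A p \<alpha> \<beta>" "finite T \<Longrightarrow> \<gamma> ` {0..1} \<subseteq> Dfin A"
proof -
  let ?L = "lp_norm p (\<lambda>\<tau>. d (a \<tau>) (b \<tau>)) T"
  have fin: "?L < \<infinity>" using le_less_trans[OF W] .
  have dfin: "d (a \<tau>) (b \<tau>) < \<infinity>" if "\<tau> \<in> T" for \<tau>
    using le_less_trans[OF le_lp_norm[OF p that] fin] .
  obtain H where H: "\<And>\<tau>. \<tau> \<in> T \<Longrightarrow> H \<tau> 0 = a \<tau>" "\<And>\<tau>. \<tau> \<in> T \<Longrightarrow> H \<tau> 1 = b \<tau>"
    "\<And>\<tau> s t. \<tau> \<in> T \<Longrightarrow> s \<in> {0..1} \<Longrightarrow> t \<in> {0..1} \<Longrightarrow> d (H \<tau> s) (H \<tau> t) = ennreal \<bar>s - t\<bar> * d (a \<tau>) (b \<tau>)"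
    by (rule constant_speed_geodesic_family[where T=T and a=a and b=b, OF md gs dfin]) (assumption | rule that)+
  define \<gamma> where "\<gamma> t = (if t = 0 then \<alpha> else if t = 1 then \<beta> else interpolate A T H t)" for t
  have \<gamma>01: "\<gamma> 0 = \<alpha>" "\<gamma> 1 = \<beta>" by (simp_all add: \<gamma>_def)
  have fsums: "\<gamma> t \<in> fsums A" for t
    using \<alpha> \<beta> Dbar_subset_fsums interpolate_in_fsums by (auto simp: \<gamma>_def)
  have rep: "represents A T (\<lambda>\<tau>. H \<tau> t) (\<gamma> t)" for t
    using represents_cong[OF a, of "\<lambda>\<tau>. H \<tau> 0"] represents_cong[OF b, of "\<lambda>\<tau>. H \<tau> 1"] H(1,2)
      represents_interpolate[of A T H t] by (simp add: \<gamma>_def)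
  have lip: "Wp d A p (\<gamma> s) (\<gamma> t) \<le> ennreal \<bar>s - t\<bar> * ?L" if "s \<in> {0..1}" "t \<in> {0..1}" for s t
  proof -
    have "Wp d A p (\<gamma> s) (\<gamma> t) \<le> lp_norm p (\<lambda>\<tau>. d (H \<tau> s) (H \<tau> t)) T"
      by (rule Wp_le_lp_norm_represents[OF p rep rep])
    also have "\<dots> = lp_norm p (\<lambda>\<tau>. ennreal \<bar>s - t\<bar> * d (a \<tau>) (b \<tau>)) T"
      using H(3) that by (intro lp_norm_cong) auto
    finally show ?thesis by (simp add: lp_norm_mult_left[OF p])
  qed
  have "d (a \<tau>) (H \<tau> t) \<le> d (a \<tau>) (b \<tau>)" if "\<tau> \<in> T" "t \<in> {0..1}" for \<tau> t
    using H(3)[OF that(1), of 0 t] H(1)[OF that(1)] that(2)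
    using mult_right_mono[of "ennreal t" 1 "d (a \<tau>) (b \<tau>)"] by simp
  then have "\<gamma> t \<in> Dbar d A p" if "t \<in> {0..1}" for t
    using that by (intro Dbar_of_represents_between[OF md dm p \<alpha> \<beta> fsums a b rep _ fin close]) auto
  moreover have "\<gamma> t \<in> Dfin A" if "finite T" for t
    by (rule Dfin_of_represents[OF rep that fsums])
  moreover have "path_cont (Wp d A p) \<gamma>" "path_length (Wp d A p) \<gamma> = Wp d A p \<alpha> \<beta>"
    using lipschitz_path_is_geodesic[of "Wp d A p" \<gamma> ?L, OF _ _ lip] W \<gamma>01 by simp_all
  ultimately show ?thesis
    using that[of \<gamma>] \<gamma>01 by (auto simp: image_subset_iff)
qed

section \<open>Existence of optimal matchings\<close>

lemma subseq_constant_or_avoiding: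
  fixes f :: "nat \<Rightarrow> 'b"
  assumes "finite {v. P v}"
  obtains r :: "nat \<Rightarrow> nat" where "strict_mono r" "(\<exists>v. \<forall>i. f (r i) = v) \<or> (\<forall>i. \<not> P (f (r i)))"
proof (cases "finite {i. P (f i)}")
  case True
  then have "infinite {i. \<not> P (f i)}"
    using infinite_UNIV_nat by (metis (mono_tags) Collect_neg_eq Diff_infinite_finite Compl_eq_Diff_UNIV)
  then show ?thesis
    using that[of "enumerate {i. \<not> P (f i)}"] strict_mono_enumerate enumerate_in_set by blast
next
  case False
  have "{i. P (f i)} \<subseteq> (\<Union>v\<in>{v. P v}. {i. f i = v})" by auto
  then obtain v where "infinite {i. f i = v}"
    using assms False by (meson finite_UN_I finite_subset)
  then show ?thesis
    using that[of "enumerate {i. f i = v}"] strict_mono_enumerate enumerate_in_set by blast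
qed

lemma diagonal_subseq_constant_or_escaping:
  fixes h :: "nat \<Rightarrow> nat \<Rightarrow> 'b" and Q :: "nat \<Rightarrow> nat \<Rightarrow> 'b \<Rightarrow> bool"
  assumes "\<And>m k. finite {v. Q m k v}"
  obtains r :: "nat \<Rightarrow> nat" where "strict_mono r" "\<And>m. (\<exists>v. \<forall>\<^sub>F n in sequentially. h (r n) m = v)
    \<or> (\<forall>k. \<forall>\<^sub>F n in sequentially. \<not> Q m k (h (r n) m))"
proof -
  define P where "P n s \<longleftrightarrow> (case prod_decode n of (m, k) \<Rightarrow>
      (\<exists>v. \<forall>i. h (s i) m = v) \<or> (\<forall>i. \<not> Q m k (h (s i) m)))" for n and s :: "nat \<Rightarrow> nat"
  interpret subseqs P
  proof
    fix n and s :: "nat \<Rightarrow> nat"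
    obtain m k where mk: "prod_decode n = (m, k)" by fastforce
    obtain r :: "nat \<Rightarrow> nat" where "strict_mono r" "(\<exists>v. \<forall>i. h (s (r i)) m = v) \<or> (\<forall>i. \<not> Q m k (h (s (r i)) m))"
      by (rule subseq_constant_or_avoiding[OF assms[of m k]])
    then show "\<exists>r'. strict_mono r' \<and> P n (s \<circ> r')"
      using mk by (auto simp: P_def)
  qed
  have diag: "P n (diagseq \<circ> (+) (Suc n))" for n
    by (rule diagseq_holds) (auto simp: P_def split: prod.splits)
  have "(\<exists>v. \<forall>\<^sub>F j in sequentially. h (diagseq j) m = v) \<or> (\<forall>\<^sub>F j in sequentially. \<not> Q m k (h (diagseq j) m))"
    for m k
  proof -
    define n where "n = prod_encode (m, k)"
    have tail: "\<forall>\<^sub>F j in sequentially. R j" if "\<forall>i. R (Suc n + i)" for R :: "nat \<Rightarrow> bool"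
      unfolding eventually_sequentially using that by (metis le_add_diff_inverse)
    from diag[of n] show ?thesis
      by (auto simp: P_def n_def intro!: tail)
  qed
  then show ?thesis
    using that[OF subseq_diagseq] by blast
qed

text \<open>The weights \<open>sx\<close>, \<open>sy\<close> stand
  for the distance to \<open>A\<close>; only finitely many points have weight above any positive threshold.\<close>

lemma matching_subseq_limit:
  fixes KK :: "nat \<Rightarrow> nat set" and \<Phi> :: "nat \<Rightarrow> nat \<Rightarrow> nat" and sx sy :: "nat \<Rightarrow> ennreal"
  assumes KK: "\<And>n. KK n \<subseteq> I" "\<And>n. inj_on (\<Phi> n) (KK n)" "\<And>n. \<Phi> n ` KK n \<subseteq> J"
    and fin: "\<And>\<eta>. \<eta> > 0 \<Longrightarrow> finite {i\<in>I. ennreal \<eta> \<le> sx i}" "\<And>\<eta>. \<eta> > 0 \<Longrightarrow> finite {j\<in>J. ennreal \<eta> \<le> sy j}"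
  shows "\<exists>r K \<phi>. strict_mono r \<and> K \<subseteq> I \<and> inj_on \<phi> K \<and> \<phi> ` K \<subseteq> J
    \<and> (\<forall>i\<in>K. \<forall>\<^sub>F n in sequentially. i \<in> KK (r n) \<and> \<Phi> (r n) i = \<phi> i)
    \<and> (\<forall>i\<in>I - K. \<forall>\<eta>>0. \<forall>\<^sub>F n in sequentially. i \<in> KK (r n) \<longrightarrow> sy (\<Phi> (r n) i) < ennreal \<eta>)
    \<and> (\<forall>j\<in>J - \<phi> ` K. \<forall>\<eta>>0. \<forall>\<^sub>F n in sequentially.
         j \<in> \<Phi> (r n) ` KK (r n) \<longrightarrow> sx (inv_into (KK (r n)) (\<Phi> (r n)) j) < ennreal \<eta>)"
proof -
  define f where "f n i = (if i \<in> KK n then Some (\<Phi> n i) else None)" for n i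
  define g where "g n j = (if j \<in> \<Phi> n ` KK n then Some (inv_into (KK n) (\<Phi> n) j) else None)" for n j
  define h where "h n m = (if even m then f n (m div 2) else g n (m div 2))" for n m :: nat
  define Q where "Q m k v \<longleftrightarrow> (\<exists>j. v = Some j \<and> (if even m then j \<in> J \<and> ennreal (1 / Suc k) \<le> sy j
      else j \<in> I \<and> ennreal (1 / Suc k) \<le> sx j))" for m k :: nat and v
  have "finite {v. Q m k v}" for m k
  proof -
    have "{v. Q m k v} \<subseteq> Some ` ({j\<in>J. ennreal (1 / Suc k) \<le> sy j} \<union> {j\<in>I. ennreal (1 / Suc k) \<le> sx j})"
      by (auto simp: Q_def split: if_splits)
    then show ?thesis using fin[of "1 / Suc k"] by (auto elim: finite_subset)
  qed
  then obtain r where r: "strict_mono r" and conv: "\<And>m. (\<exists>v. \<forall>\<^sub>F n in sequentially. h (r n) m = v)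
      \<or> (\<forall>k. \<forall>\<^sub>F n in sequentially. \<not> Q m k (h (r n) m))"
    using diagonal_subseq_constant_or_escaping by blast
  have small: "\<exists>k. ennreal (1 / Suc k) \<le> ennreal \<eta>" if \<eta>: "\<eta> > 0" for \<eta> :: real
  proof -
    obtain k where "inverse (real (Suc k)) < \<eta>" using reals_Archimedean[OF \<eta>] by blast
    then show ?thesis by (intro exI[of _ k] ennreal_leI) (simp add: inverse_eq_divide)
  qed
  define K where "K = {i\<in>I. \<exists>j. \<forall>\<^sub>F n in sequentially. f (r n) i = Some j}"
  define \<phi> where "\<phi> i = (SOME j. \<forall>\<^sub>F n in sequentially. f (r n) i = Some j)" for i
  have f_\<phi>: "\<forall>\<^sub>F n in sequentially. f (r n) i = Some (\<phi> i)" if "i \<in> K" for i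
    unfolding \<phi>_def by (rule someI_ex) (use that in \<open>auto simp: K_def\<close>)
  have lim: "\<forall>\<^sub>F n in sequentially. i \<in> KK (r n) \<and> \<Phi> (r n) i = \<phi> i" if "i \<in> K" for i
    using f_\<phi>[OF that] by (rule eventually_mono) (auto simp: f_def split: if_splits)
  have inj: "inj_on \<phi> K"
  proof (rule inj_onI)
    fix i i' assume "i \<in> K" "i' \<in> K" "\<phi> i = \<phi> i'"
    moreover obtain n where "i \<in> KK (r n)" "\<Phi> (r n) i = \<phi> i" "i' \<in> KK (r n)" "\<Phi> (r n) i' = \<phi> i'"
      using eventually_happens'[OF sequentially_bot eventually_conj[OF lim[OF \<open>i \<in> K\<close>] lim[OF \<open>i' \<in> K\<close>]]]
      by auto
    ultimately show "i = i'" using KK(2) by (metis inj_onD)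
  qed
  have KJ: "\<phi> ` K \<subseteq> J"
  proof
    fix j assume "j \<in> \<phi> ` K"
    then obtain i where "i \<in> K" "j = \<phi> i" by auto
    moreover obtain n where "i \<in> KK (r n)" "\<Phi> (r n) i = \<phi> i"
      using eventually_happens'[OF sequentially_bot lim[OF \<open>i \<in> K\<close>]] by auto
    ultimately show "j \<in> J" using KK(3)[of "r n"] by auto
  qed
  have escape_I: "\<forall>\<^sub>F n in sequentially. i \<in> KK (r n) \<longrightarrow> sy (\<Phi> (r n) i) < ennreal \<eta>"
    if i: "i \<in> I - K" and \<eta>: "\<eta> > 0" for i \<eta>
    using conv[of "2 * i"]
  proof (elim disjE exE)
    fix v assume ev: "\<forall>\<^sub>F n in sequentially. h (r n) (2 * i) = v"
    then have "v = None" using i by (cases v) (auto simp: K_def h_def)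
    then show ?thesis using ev by (auto simp: h_def f_def elim!: eventually_mono)
  next
    assume esc: "\<forall>k. \<forall>\<^sub>F n in sequentially. \<not> Q (2 * i) k (h (r n) (2 * i))"
    obtain k where k: "ennreal (1 / Suc k) \<le> ennreal \<eta>" using small[OF \<eta>] by blast
    show ?thesis using esc[rule_format, of k]
    proof (rule eventually_mono, intro impI)
      fix n assume nq: "\<not> Q (2 * i) k (h (r n) (2 * i))" and iK: "i \<in> KK (r n)"
      then have "sy (\<Phi> (r n) i) < ennreal (1 / Suc k)"
        using KK(3)[of "r n"] by (auto simp: Q_def h_def f_def not_le)
      then show "sy (\<Phi> (r n) i) < ennreal \<eta>" using k by (rule less_le_trans)
    qed
  qed
  have escape_J: "\<forall>\<^sub>F n in sequentially. j \<in> \<Phi> (r n) ` KK (r n) \<longrightarrow> sx (inv_into (KK (r n)) (\<Phi> (r n)) j) < ennreal \<eta>"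
    if j: "j \<in> J - \<phi> ` K" and \<eta>: "\<eta> > 0" for j \<eta>
    using conv[of "2 * j + 1"]
  proof (elim disjE exE)
    fix v assume ev: "\<forall>\<^sub>F n in sequentially. h (r n) (2 * j + 1) = v"
    have "v = None"
    proof (rule ccontr)
      assume "v \<noteq> None"
      then obtain i where v: "v = Some i" by auto
      then have ev': "\<forall>\<^sub>F n in sequentially. f (r n) i = Some j"
        using ev by (auto simp: h_def g_def f_def f_inv_into_f inv_into_into elim!: eventually_mono split: if_splits)
      then obtain n where "f (r n) i = Some j" using eventually_happens'[OF sequentially_bot] by blast
      then have "i \<in> K" using ev' KK(1) by (auto simp: K_def f_def split: if_splits)
      then have "\<forall>\<^sub>F n in sequentially. f (r n) i = Some j \<and> f (r n) i = Some (\<phi> i)"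
        using ev' f_\<phi> by (auto intro: eventually_conj)
      then have "j = \<phi> i" using eventually_happens'[OF sequentially_bot] by fastforce
      then show False using j \<open>i \<in> K\<close> by auto
    qed
    then show ?thesis using ev by (auto simp: h_def g_def elim!: eventually_mono)
  next
    assume esc: "\<forall>k. \<forall>\<^sub>F n in sequentially. \<not> Q (2 * j + 1) k (h (r n) (2 * j + 1))"
    obtain k where k: "ennreal (1 / Suc k) \<le> ennreal \<eta>" using small[OF \<eta>] by blast
    show ?thesis using esc[rule_format, of k]
    proof (rule eventually_mono, intro impI)
      fix n assume nq: "\<not> Q (2 * j + 1) k (h (r n) (2 * j + 1))" and jK: "j \<in> \<Phi> (r n) ` KK (r n)"
      then have "sx (inv_into (KK (r n)) (\<Phi> (r n)) j) < ennreal (1 / Suc k)"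
        using KK(1)[of "r n"] inv_into_into[OF jK] by (auto simp: Q_def h_def g_def not_le)
      then show "sx (inv_into (KK (r n)) (\<Phi> (r n)) j) < ennreal \<eta>" using k by (rule less_le_trans)
    qed
  qed
  have "K \<subseteq> I" by (auto simp: K_def)
  then show ?thesis
    by (intro exI[of _ r] exI[of _ K] exI[of _ \<phi>] conjI ballI allI impI r inj KJ lim escape_I escape_J)
qed

text \<open>Each matched pair charges its cost to its endpoint farther from \<open>A\<close> (ties to the \<open>x\<close>-side),
  each unmatched point its distance to \<open>A\<close>. Unlike the cost, the charge is indexed by the points
  themselves, so it can be compared along a sequence of matchings.\<close>

definition match_charge :: "('a \<Rightarrow> 'a \<Rightarrow> ennreal) \<Rightarrow> 'a set \<Rightarrow> (nat \<Rightarrow> 'a) \<Rightarrow> (nat \<Rightarrow> 'a)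
    \<Rightarrow> nat set \<Rightarrow> (nat \<Rightarrow> nat) \<Rightarrow> nat + nat \<Rightarrow> ennreal" where
  "match_charge d A x y K \<phi> \<pi> = (case \<pi> of
     Inl i \<Rightarrow> if i \<in> K then (if setdist_e d (y (\<phi> i)) A \<le> setdist_e d (x i) A then d (x i) (y (\<phi> i)) else 0)
              else setdist_e d (x i) A
   | Inr j \<Rightarrow> if j \<in> \<phi> ` K then
                (if setdist_e d (y j) A \<le> setdist_e d (x (inv_into K \<phi> j)) A then 0
                 else d (x (inv_into K \<phi> j)) (y j))
              else setdist_e d (y j) A)"

lemma lp_norm_match_charge:
  assumes p: "1 \<le> p" and KI: "K \<subseteq> I" and inj: "inj_on \<phi> K" and KJ: "\<phi> ` K \<subseteq> J"
  shows "lp_norm p (match_charge d A x y K \<phi>) (Inl ` I \<union> Inr ` J)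
    = lp_norm p (\<lambda>\<tau>. case \<tau> of Inl i \<Rightarrow> if i \<in> K then d (x i) (y (\<phi> i)) else setdist_e d (x i) A
                              | Inr j \<Rightarrow> setdist_e d (y j) A) (match_index I J K \<phi>)"
    (is "_ = lp_norm p ?c _")
proof -
  define far where "far i \<longleftrightarrow> \<not> setdist_e d (y (\<phi> i)) A \<le> setdist_e d (x i) A" for i
  define \<sigma> where "\<sigma> \<tau> = (case \<tau> of Inl i \<Rightarrow> if i \<in> K \<and> far i then Inr (\<phi> i) else Inl i | Inr j \<Rightarrow> Inr j)" for \<tau>
  have inv: "inv_into K \<phi> (\<phi> i) = i" if "i \<in> K" for i
    using inj that by (rule inv_into_f_f)
  have inj_\<sigma>: "inj_on \<sigma> (match_index I J K \<phi>)"
    using inj by (auto simp: inj_on_def \<sigma>_def match_index_def split: sum.splits if_splits)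
  have img_\<sigma>: "\<sigma> ` match_index I J K \<phi> \<subseteq> Inl ` I \<union> Inr ` J"
  proof
    fix \<pi> assume "\<pi> \<in> \<sigma> ` match_index I J K \<phi>"
    then obtain \<tau> where "\<tau> \<in> match_index I J K \<phi>" "\<pi> = \<sigma> \<tau>" by blast
    moreover have "\<phi> i \<in> J" if "i \<in> K" for i using KJ that by blast
    ultimately show "\<pi> \<in> Inl ` I \<union> Inr ` J" by (auto simp: \<sigma>_def match_index_def)
  qed
  have zero: "match_charge d A x y K \<phi> \<pi> = 0" if "\<pi> \<in> (Inl ` I \<union> Inr ` J) - \<sigma> ` match_index I J K \<phi>" for \<pi>
  proof (cases \<pi>)
    case (Inl i)
    have "i \<in> K \<and> far i"
    proof (rule ccontr)
      assume "\<not> (i \<in> K \<and> far i)"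
      then have "\<sigma> (Inl i) = \<pi>" using Inl by (simp add: \<sigma>_def)
      moreover have "Inl i \<in> match_index I J K \<phi>" using that Inl by (auto simp: match_index_def)
      ultimately show False using that by blast
    qed
    then show ?thesis using Inl by (simp add: match_charge_def far_def)
  next
    case (Inr j)
    have "j \<in> \<phi> ` K"
    proof (rule ccontr)
      assume "j \<notin> \<phi> ` K"
      then have "Inr j \<in> match_index I J K \<phi>" using that Inr by (auto simp: match_index_def)
      moreover have "\<sigma> (Inr j) = \<pi>" using Inr by (simp add: \<sigma>_def)
      ultimately show False using that by blast
    qed
    then obtain i where i: "i \<in> K" "j = \<phi> i" by blast
    have "\<not> far i"
    proof
      assume "far i"
      then have "\<sigma> (Inl i) = \<pi>" using Inr i by (simp add: \<sigma>_def)
      moreover have "Inl i \<in> match_index I J K \<phi>" using KI i by (auto simp: match_index_def)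
      ultimately show False using that by blast
    qed
    then show ?thesis using Inr i inv by (simp add: match_charge_def far_def)
  qed
  have "lp_norm p (match_charge d A x y K \<phi>) (Inl ` I \<union> Inr ` J)
      = lp_norm p (match_charge d A x y K \<phi>) (\<sigma> ` match_index I J K \<phi>)"
    by (rule lp_norm_zero_outside[OF p img_\<sigma> zero])
  also have "\<dots> = lp_norm p (match_charge d A x y K \<phi> \<circ> \<sigma>) (match_index I J K \<phi>)"
    by (rule lp_norm_reindex[OF inj_\<sigma>])
  also have "\<dots> = lp_norm p ?c (match_index I J K \<phi>)"
    using inv by (intro lp_norm_cong) (auto simp: match_charge_def \<sigma>_def far_def match_index_def)
  finally show ?thesis .
qed

lemma lp_norm_match_charge_le_pcost:
  assumes p: "1 \<le> p" and md: "metric_on d" and m: "is_matching A (I, x) (J, y) (K, \<phi>, z, w)"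
  shows "lp_norm p (match_charge d A x y K \<phi>) (Inl ` I \<union> Inr ` J) \<le> pcost d p (I, x) (J, y) (K, \<phi>, z, w)"
proof -
  have KI: "K \<subseteq> I" and inj: "inj_on \<phi> K" and KJ: "\<phi> ` K \<subseteq> J"
    and zA: "\<And>i. i \<in> I - K \<Longrightarrow> z i \<in> A" and wA: "\<And>j. j \<in> J - \<phi> ` K \<Longrightarrow> w j \<in> A"
    using m by (auto simp: is_matching_def)
  have w: "setdist_e d (y j) A \<le> d (w j) (y j)" if "j \<in> J - \<phi> ` K" for j
    using setdist_e_le[OF wA[OF that], of d "y j"] metric_onD(2)[OF md, of "w j" "y j"] by simp
  show ?thesis
    unfolding lp_norm_match_charge[OF p KI inj KJ] pcost_eq_lp_norm[OF KI]
    using zA w by (intro lp_norm_mono[OF p]) (auto simp: match_index_def match_src_def match_tgt_def setdist_e_le)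
qed

lemma pcost_le_lp_norm_match_charge:
  assumes p: "1 \<le> p" and md: "metric_on d" and m: "is_matching A (I, x) (J, y) (K, \<phi>, z, w)"
    and z: "\<And>i. i \<in> I - K \<Longrightarrow> d (x i) (z i) = setdist_e d (x i) A"
    and w: "\<And>j. j \<in> J - \<phi> ` K \<Longrightarrow> d (y j) (w j) = setdist_e d (y j) A"
  shows "pcost d p (I, x) (J, y) (K, \<phi>, z, w) \<le> lp_norm p (match_charge d A x y K \<phi>) (Inl ` I \<union> Inr ` J)"
proof -
  have KI: "K \<subseteq> I" and inj: "inj_on \<phi> K" and KJ: "\<phi> ` K \<subseteq> J"
    using m by (auto simp: is_matching_def)
  have w': "d (w j) (y j) = setdist_e d (y j) A" if "j \<in> J - \<phi> ` K" for j
    using w[OF that] metric_onD(2)[OF md, of "w j" "y j"] by simp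
  show ?thesis
    unfolding lp_norm_match_charge[OF p KI inj KJ] pcost_eq_lp_norm[OF KI]
    using z w' by (intro lp_norm_mono[OF p]) (auto simp: match_index_def match_src_def match_tgt_def)
qed

lemma le_mult_of_le_add_small:
  fixes a :: ennreal and \<epsilon> :: real
  assumes a: "0 < a" and \<epsilon>: "0 < \<epsilon>"
  obtains \<eta> where "\<eta> > 0" "\<And>c \<rho>. a \<le> c + \<rho> \<Longrightarrow> \<rho> < ennreal \<eta> \<Longrightarrow> \<rho> < a \<and> a \<le> ennreal (1 + \<epsilon>) * c"
proof (cases "a = \<infinity>")
  case True
  have "\<rho> < a \<and> a \<le> ennreal (1 + \<epsilon>) * c" if le: "a \<le> c + \<rho>" and small: "\<rho> < ennreal 1" for c \<rho>
  proof -
    have "\<rho> < \<infinity>" using order.strict_trans[OF small ennreal_less_top] by simp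
    moreover from this have "c = \<infinity>" using le True by (auto simp: top_unique ennreal_add_eq_top)
    ultimately show ?thesis using True \<epsilon> by (simp add: ennreal_mult_top)
  qed
  then show ?thesis using that[of 1] by simp
next
  case False
  then obtain a' where a': "a = ennreal a'" "a' > 0" using a by (cases a rule: ennreal_cases) auto
  define \<eta> where "\<eta> = a' * \<epsilon> / (1 + \<epsilon>)"
  have "\<rho> < a \<and> a \<le> ennreal (1 + \<epsilon>) * c" if le: "a \<le> c + \<rho>" and small: "\<rho> < ennreal \<eta>" for c \<rho>
  proof
    obtain r where r: "\<rho> = ennreal r" "0 \<le> r" "r < \<eta>"
      using small by (cases \<rho> rule: ennreal_cases) (auto simp: ennreal_less_iff)
    have "\<eta> < a'" using a' \<epsilon> by (simp add: \<eta>_def field_simps)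
    then show "\<rho> < a" using r a' by (simp add: ennreal_less_iff)
    show "a \<le> ennreal (1 + \<epsilon>) * c"
    proof (cases "c = \<infinity>")
      case True
      then show ?thesis using \<epsilon> by (simp add: ennreal_mult_top)
    next
      case False
      then obtain c' where c': "c = ennreal c'" "0 \<le> c'" by (cases c rule: ennreal_cases) auto
      have "a' \<le> c' + r" using le a' c' r by (simp flip: ennreal_plus)
      then have "(1 + \<epsilon>) * (a' - \<eta>) \<le> (1 + \<epsilon>) * c'"
        using r \<epsilon> by (intro mult_left_mono) auto
      moreover have "(1 + \<epsilon>) * (a' - \<eta>) = a'"
        using \<epsilon> by (simp add: \<eta>_def field_simps)
      ultimately have "ennreal a' \<le> ennreal ((1 + \<epsilon>) * c')" by (intro ennreal_leI) simp
      then show ?thesis using a' c' \<epsilon> by (simp add: ennreal_mult)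
    qed
  qed
  moreover have "\<eta> > 0" using a' \<epsilon> by (simp add: \<eta>_def)
  ultimately show ?thesis using that by blast
qed

context
  fixes d :: "'a \<Rightarrow> 'a \<Rightarrow> ennreal" and A :: "'a set" and x y :: "nat \<Rightarrow> 'a" and I J K :: "nat set"
    and \<phi> :: "nat \<Rightarrow> nat" and KK :: "nat \<Rightarrow> nat set" and \<Phi> :: "nat \<Rightarrow> nat \<Rightarrow> nat"
  assumes md: "metric_on d"
    and x_pos: "\<And>i. i \<in> I \<Longrightarrow> 0 < setdist_e d (x i) A" and y_pos: "\<And>j. j \<in> J \<Longrightarrow> 0 < setdist_e d (y j) A"
    and inj: "inj_on \<phi> K" and inj_KK: "\<And>n. inj_on (\<Phi> n) (KK n)"
    and lim: "\<And>i. i \<in> K \<Longrightarrow> \<forall>\<^sub>F n in sequentially. i \<in> KK n \<and> \<Phi> n i = \<phi> i"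
    and escape_I: "\<And>i \<eta>. i \<in> I - K \<Longrightarrow> \<eta> > 0 \<Longrightarrow>
       \<forall>\<^sub>F n in sequentially. i \<in> KK n \<longrightarrow> setdist_e d (y (\<Phi> n i)) A < ennreal \<eta>"
    and escape_J: "\<And>j \<eta>. j \<in> J - \<phi> ` K \<Longrightarrow> \<eta> > 0 \<Longrightarrow>
       \<forall>\<^sub>F n in sequentially. j \<in> \<Phi> n ` KK n \<longrightarrow> setdist_e d (x (inv_into (KK n) (\<Phi> n) j)) A < ennreal \<eta>"
begin

text \<open>A point whose charge in the limit is its distance to \<open>A\<close> keeps (almost) that charge along
  the sequence: it is either unmatched, or matched to points close to \<open>A\<close>, which by the triangle
  inequality costs almost its distance to \<open>A\<close>.\<close>

lemma match_charge_Inl_eventually_ge: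
  assumes "i \<in> I" "\<epsilon> > 0"
  shows "\<forall>\<^sub>F n in sequentially. match_charge d A x y K \<phi> (Inl i) \<le> ennreal (1 + \<epsilon>) * match_charge d A x y (KK n) (\<Phi> n) (Inl i)"
proof -
  have le: "c \<le> ennreal (1 + \<epsilon>) * c" for c
    using mult_right_mono[of 1 "ennreal (1 + \<epsilon>)" c] assms(2) by simp
  show ?thesis
  proof (cases "i \<in> K")
    case True
    show ?thesis using lim[OF True] by (rule eventually_mono) (use True le in \<open>simp add: match_charge_def\<close>)
  next
    case False
    let ?a = "setdist_e d (x i) A"
    obtain \<eta> where \<eta>: "\<eta> > 0" "\<And>c \<rho>. ?a \<le> c + \<rho> \<Longrightarrow> \<rho> < ennreal \<eta> \<Longrightarrow> \<rho> < ?a \<and> ?a \<le> ennreal (1 + \<epsilon>) * c"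
      using le_mult_of_le_add_small[OF x_pos[OF assms(1)] assms(2)] by blast
    have "\<forall>\<^sub>F n in sequentially. i \<in> KK n \<longrightarrow> setdist_e d (y (\<Phi> n i)) A < ennreal \<eta>"
      using escape_I False assms(1) \<eta>(1) by blast
    then show ?thesis
    proof (rule eventually_mono)
      fix n assume near: "i \<in> KK n \<longrightarrow> setdist_e d (y (\<Phi> n i)) A < ennreal \<eta>"
      show "match_charge d A x y K \<phi> (Inl i) \<le> ennreal (1 + \<epsilon>) * match_charge d A x y (KK n) (\<Phi> n) (Inl i)"
      proof (cases "i \<in> KK n")
        case True
        have "?a \<le> d (x i) (y (\<Phi> n i)) + setdist_e d (y (\<Phi> n i)) A" by (rule setdist_e_triangle[OF md])
        then show ?thesis using \<eta>(2) near True False by (fastforce simp: match_charge_def)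
      qed (use False le in \<open>simp add: match_charge_def\<close>)
    qed
  qed
qed

lemma match_charge_Inr_eventually_ge:
  assumes "j \<in> J" "\<epsilon> > 0"
  shows "\<forall>\<^sub>F n in sequentially. match_charge d A x y K \<phi> (Inr j) \<le> ennreal (1 + \<epsilon>) * match_charge d A x y (KK n) (\<Phi> n) (Inr j)"
proof -
  have le: "c \<le> ennreal (1 + \<epsilon>) * c" for c
    using mult_right_mono[of 1 "ennreal (1 + \<epsilon>)" c] assms(2) by simp
  show ?thesis
  proof (cases "j \<in> \<phi> ` K")
    case True
    define i where "i = inv_into K \<phi> j"
    have i: "i \<in> K" "\<phi> i = j" using True by (auto simp: i_def inv_into_into f_inv_into_f)
    show ?thesis using lim[OF i(1)]
    proof (rule eventually_mono)
      fix n assume n: "i \<in> KK n \<and> \<Phi> n i = \<phi> i"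
      then have "j \<in> \<Phi> n ` KK n" using i by force
      moreover have "inv_into (KK n) (\<Phi> n) j = i"
        using n i inv_into_f_f[OF inj_KK] by metis
      ultimately show "match_charge d A x y K \<phi> (Inr j) \<le> ennreal (1 + \<epsilon>) * match_charge d A x y (KK n) (\<Phi> n) (Inr j)"
        using True le by (simp add: match_charge_def i_def[symmetric])
    qed
  next
    case False
    let ?b = "setdist_e d (y j) A"
    obtain \<eta> where \<eta>: "\<eta> > 0" "\<And>c \<rho>. ?b \<le> c + \<rho> \<Longrightarrow> \<rho> < ennreal \<eta> \<Longrightarrow> \<rho> < ?b \<and> ?b \<le> ennreal (1 + \<epsilon>) * c"
      using le_mult_of_le_add_small[OF y_pos[OF assms(1)] assms(2)] by blast
    have "\<forall>\<^sub>F n in sequentially. j \<in> \<Phi> n ` KK n \<longrightarrow> setdist_e d (x (inv_into (KK n) (\<Phi> n) j)) A < ennreal \<eta>"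
      using escape_J False assms(1) \<eta>(1) by blast
    then show ?thesis
    proof (rule eventually_mono)
      fix n assume near: "j \<in> \<Phi> n ` KK n \<longrightarrow> setdist_e d (x (inv_into (KK n) (\<Phi> n) j)) A < ennreal \<eta>"
      show "match_charge d A x y K \<phi> (Inr j) \<le> ennreal (1 + \<epsilon>) * match_charge d A x y (KK n) (\<Phi> n) (Inr j)"
      proof (cases "j \<in> \<Phi> n ` KK n")
        case True
        let ?i = "inv_into (KK n) (\<Phi> n) j"
        have "?b \<le> d (y j) (x ?i) + setdist_e d (x ?i) A" by (rule setdist_e_triangle[OF md])
        then have "setdist_e d (x ?i) A < ?b" "?b \<le> ennreal (1 + \<epsilon>) * d (x ?i) (y j)"
          using \<eta>(2) near True metric_onD(2)[OF md, of "y j" "x ?i"] by auto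
        then show ?thesis using True False by (simp add: match_charge_def)
      qed (use False le in \<open>simp add: match_charge_def\<close>)
    qed
  qed
qed

lemma match_charge_eventually_ge:
  "\<pi> \<in> Inl ` I \<union> Inr ` J \<Longrightarrow> \<epsilon> > 0 \<Longrightarrow>
    \<forall>\<^sub>F n in sequentially. match_charge d A x y K \<phi> \<pi> \<le> ennreal (1 + \<epsilon>) * match_charge d A x y (KK n) (\<Phi> n) \<pi>"
  using match_charge_Inl_eventually_ge match_charge_Inr_eventually_ge by blast

end

lemma lp_norm_le_of_eventually_dominated:
  assumes p: "1 \<le> p"
    and dom: "\<And>\<pi> \<epsilon>. \<pi> \<in> S \<Longrightarrow> \<epsilon> > 0 \<Longrightarrow> \<forall>\<^sub>F n in sequentially. f \<pi> \<le> ennreal (1 + \<epsilon>) * g n \<pi>"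
    and bound: "\<And>\<epsilon>. \<epsilon> > 0 \<Longrightarrow> \<forall>\<^sub>F n in sequentially. lp_norm p (g n) S \<le> W + ennreal \<epsilon>"
  shows "lp_norm p f S \<le> W"
proof (rule lp_norm_le_of_finite_subsets[OF p])
  fix F assume F: "finite F" "F \<subseteq> S"
  show "lp_norm p f F \<le> W"
  proof (rule ennreal_le_epsilon)
    fix e :: real assume "W < top" "0 < e"
    then obtain W' where W': "W = ennreal W'" "W' \<ge> 0" by (cases W rule: ennreal_cases) auto
    define \<epsilon> where "\<epsilon> = min 1 (e / (W' + 2))"
    have \<epsilon>: "0 < \<epsilon>" "\<epsilon> \<le> 1" "\<epsilon> * (W' + 2) \<le> e"
    proof -
      have "\<epsilon> \<le> e / (W' + 2)" by (simp add: \<epsilon>_def)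
      then show "\<epsilon> * (W' + 2) \<le> e" using W' by (simp add: le_divide_eq)
    qed (use \<open>0 < e\<close> W' in \<open>auto simp: \<epsilon>_def\<close>)
    have "\<forall>\<^sub>F n in sequentially. (\<forall>\<pi>\<in>F. f \<pi> \<le> ennreal (1 + \<epsilon>) * g n \<pi>) \<and> lp_norm p (g n) S \<le> W + ennreal \<epsilon>"
      using F \<epsilon>(1) dom bound by (intro eventually_conj eventually_ball_finite) auto
    then obtain n where n: "\<forall>\<pi>\<in>F. f \<pi> \<le> ennreal (1 + \<epsilon>) * g n \<pi>" "lp_norm p (g n) S \<le> W + ennreal \<epsilon>"
      using eventually_happens'[OF sequentially_bot] by blast
    have "lp_norm p f F \<le> lp_norm p (\<lambda>\<pi>. ennreal (1 + \<epsilon>) * g n \<pi>) F"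
      using n(1) by (intro lp_norm_mono[OF p]) auto
    also have "\<dots> = ennreal (1 + \<epsilon>) * lp_norm p (g n) F"
      using \<epsilon> by (intro lp_norm_mult_left[OF p]) simp
    also have "\<dots> \<le> ennreal (1 + \<epsilon>) * (W + ennreal \<epsilon>)"
      using lp_norm_mono_set[OF p F(2), of "g n"] n(2) by (intro mult_left_mono) auto
    also have "\<dots> = ennreal ((1 + \<epsilon>) * (W' + \<epsilon>))"
      using \<epsilon> W' by (simp add: ennreal_mult ennreal_plus)
    also have "\<dots> \<le> ennreal (W' + e)"
    proof (rule ennreal_leI)
      have "(1 + \<epsilon>) * (W' + \<epsilon>) = W' + \<epsilon> * (W' + 1 + \<epsilon>)" by (simp add: algebra_simps)
      also have "\<epsilon> * (W' + 1 + \<epsilon>) \<le> \<epsilon> * (W' + 2)" using \<epsilon> by (intro mult_left_mono) auto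
      finally show "(1 + \<epsilon>) * (W' + \<epsilon>) \<le> W' + e" using \<epsilon>(3) by linarith
    qed
    finally show "lp_norm p f F \<le> W + ennreal e"
      using W' \<open>0 < e\<close> by (simp add: ennreal_plus)
  qed
qed

lemma eventually_inverse_Suc_le:
  assumes "strict_mono r" "\<epsilon> > 0"
  shows "\<forall>\<^sub>F n in sequentially. ennreal (1 / Suc (r n)) \<le> ennreal \<epsilon>"
proof -
  obtain N where N: "inverse (real (Suc N)) < \<epsilon>" using reals_Archimedean[OF assms(2)] by blast
  have "1 / Suc (r n) \<le> \<epsilon>" if "N \<le> n" for n
  proof -
    have "N \<le> r n" using seq_suble[OF assms(1), of n] that by linarith
    then have "1 / Suc (r n) \<le> 1 / Suc N" by (intro divide_left_mono) auto
    then show ?thesis using N by (simp add: inverse_eq_divide)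
  qed
  then show ?thesis unfolding eventually_sequentially by (blast intro: ennreal_leI)
qed

lemma almost_optimal_matchings:
  assumes "Wp d A p \<alpha> \<beta> < \<infinity>"
  obtains KK \<Phi> Z WW where "\<And>n. is_matching A \<alpha> \<beta> (KK n, \<Phi> n, Z n, WW n)"
    "\<And>n. pcost d p \<alpha> \<beta> (KK n, \<Phi> n, Z n, WW n) < Wp d A p \<alpha> \<beta> + ennreal (1 / Suc n)"
proof -
  let ?W = "Wp d A p \<alpha> \<beta>"
  have "\<exists>K \<phi> z w. is_matching A \<alpha> \<beta> (K, \<phi>, z, w) \<and> pcost d p \<alpha> \<beta> (K, \<phi>, z, w) < ?W + ennreal (1 / Suc n)"
    for n
  proof -
    have "?W < ?W + ennreal (1 / Suc n)"
      using assms by (cases ?W rule: ennreal_cases) (auto simp flip: ennreal_plus intro!: ennreal_lessI add_nonneg_pos)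
    then obtain m where "is_matching A \<alpha> \<beta> m" "pcost d p \<alpha> \<beta> m < ?W + ennreal (1 / Suc n)"
      unfolding Wp_def by (auto simp: INF_less_iff)
    then show ?thesis by (cases m) blast
  qed
  then show ?thesis using that by metis
qed

lemma matching_of_charge_bound:
  assumes md: "metric_on d" and dm: "dist_minimizing d A" and p: "1 \<le> p"
    and K: "K \<subseteq> I" "inj_on \<phi> K" "\<phi> ` K \<subseteq> J"
    and charge: "lp_norm p (match_charge d A x y K \<phi>) (Inl ` I \<union> Inr ` J) \<le> W" and W: "W < \<infinity>"
  obtains z w where "is_matching A (I, x) (J, y) (K, \<phi>, z, w)" "pcost d p (I, x) (J, y) (K, \<phi>, z, w) \<le> W"
proof -
  let ?c = "match_charge d A x y K \<phi>"
  have far_x: "setdist_e d (x i) A < \<infinity>" if "i \<in> I - K" for i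
    using le_lp_norm[OF p, of "Inl i" "Inl ` I \<union> Inr ` J" ?c] charge W that by (simp add: match_charge_def)
  have far_y: "setdist_e d (y j) A < \<infinity>" if "j \<in> J - \<phi> ` K" for j
    using le_lp_norm[OF p, of "Inr j" "Inl ` I \<union> Inr ` J" ?c] charge W that by (simp add: match_charge_def)
  define z where "z i = nearest d A (x i)" for i
  define w where "w j = nearest d A (y j)" for j
  have m: "is_matching A (I, x) (J, y) (K, \<phi>, z, w)"
    using K nearest(1)[OF dm far_x] nearest(1)[OF dm far_y] by (auto simp: is_matching_def z_def w_def)
  moreover have "pcost d p (I, x) (J, y) (K, \<phi>, z, w) \<le> lp_norm p ?c (Inl ` I \<union> Inr ` J)"
    using nearest(2)[OF dm far_x] nearest(2)[OF dm far_y]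
    by (intro pcost_le_lp_norm_match_charge[OF p md m]) (simp_all add: z_def w_def)
  ultimately show ?thesis using that charge by (blast intro: order_trans)
qed

lemma optimal_matching_exists:
  assumes mp: "metric_pair d A" and dm: "dist_minimizing d A" and p: "1 \<le> p"
    and \<alpha>: "(I, x) \<in> Dbar d A p" and \<beta>: "(J, y) \<in> Dbar d A p" and W: "Wp d A p (I, x) (J, y) < \<infinity>"
  obtains K \<phi> z w where "is_matching A (I, x) (J, y) (K, \<phi>, z, w)"
    "pcost d p (I, x) (J, y) (K, \<phi>, z, w) \<le> Wp d A p (I, x) (J, y)"
proof -
  have md: "metric_on d" and mc: "mclosed d A" using mp by (auto simp: metric_pair_def)
  let ?W = "Wp d A p (I, x) (J, y)"
  let ?S = "Inl ` I \<union> Inr ` J"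
  obtain KK \<Phi> Z WW where M: "\<And>n. is_matching A (I, x) (J, y) (KK n, \<Phi> n, Z n, WW n)"
    "\<And>n. pcost d p (I, x) (J, y) (KK n, \<Phi> n, Z n, WW n) < ?W + ennreal (1 / Suc n)"
    using almost_optimal_matchings[OF W] by blast
  have KK: "KK n \<subseteq> I" "inj_on (\<Phi> n) (KK n)" "\<Phi> n ` KK n \<subseteq> J" for n
    using M(1)[of n] by (auto simp: is_matching_def)
  have x_pos: "0 < setdist_e d (x i) A" if "i \<in> I" for i
    using setdist_e_pos[OF mc] \<alpha> Dbar_subset_fsums that by (fastforce simp: fsums_def)
  have y_pos: "0 < setdist_e d (y j) A" if "j \<in> J" for j
    using setdist_e_pos[OF mc] \<beta> Dbar_subset_fsums that by (fastforce simp: fsums_def)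
  have fin_x: "finite {i\<in>I. ennreal \<eta> \<le> setdist_e d (x i) A}" if "\<eta> > 0" for \<eta>
    using Dbar_finite_setdist_ge[OF p dm \<alpha>, of "ennreal \<eta>"] that by simp
  have fin_y: "finite {j\<in>J. ennreal \<eta> \<le> setdist_e d (y j) A}" if "\<eta> > 0" for \<eta>
    using Dbar_finite_setdist_ge[OF p dm \<beta>, of "ennreal \<eta>"] that by simp
  obtain r :: "nat \<Rightarrow> nat" and K \<phi> where r: "strict_mono r" and K: "K \<subseteq> I" "inj_on \<phi> K" "\<phi> ` K \<subseteq> J"
    and lim: "\<forall>i\<in>K. \<forall>\<^sub>F n in sequentially. i \<in> KK (r n) \<and> \<Phi> (r n) i = \<phi> i"
    and escape_I: "\<forall>i\<in>I - K. \<forall>\<eta>>0.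
       \<forall>\<^sub>F n in sequentially. i \<in> KK (r n) \<longrightarrow> setdist_e d (y (\<Phi> (r n) i)) A < ennreal \<eta>"
    and escape_J: "\<forall>j\<in>J - \<phi> ` K. \<forall>\<eta>>0. \<forall>\<^sub>F n in sequentially. j \<in> \<Phi> (r n) ` KK (r n) \<longrightarrow>
         setdist_e d (x (inv_into (KK (r n)) (\<Phi> (r n)) j)) A < ennreal \<eta>"
    using matching_subseq_limit[where KK=KK and \<Phi>=\<Phi> and sx="\<lambda>i. setdist_e d (x i) A"
        and sy="\<lambda>j. setdist_e d (y j) A", OF KK fin_x fin_y] by blast
  have bound: "\<forall>\<^sub>F n in sequentially. lp_norm p (match_charge d A x y (KK (r n)) (\<Phi> (r n))) ?S \<le> ?W + ennreal \<epsilon>"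
    if "\<epsilon> > 0" for \<epsilon>
    using eventually_inverse_Suc_le[OF r that]
  proof (rule eventually_mono)
    fix n assume n: "ennreal (1 / Suc (r n)) \<le> ennreal \<epsilon>"
    have "lp_norm p (match_charge d A x y (KK (r n)) (\<Phi> (r n))) ?S
        \<le> pcost d p (I, x) (J, y) (KK (r n), \<Phi> (r n), Z (r n), WW (r n))"
      by (rule lp_norm_match_charge_le_pcost[OF p md M(1)])
    also have "\<dots> \<le> ?W + ennreal (1 / Suc (r n))"
      using M(2)[of "r n"] by simp
    also have "\<dots> \<le> ?W + ennreal \<epsilon>"
      using n by (rule add_left_mono)
    finally show "lp_norm p (match_charge d A x y (KK (r n)) (\<Phi> (r n))) ?S \<le> ?W + ennreal \<epsilon>" .
  qed
  have "\<forall>\<^sub>F n in sequentially. match_charge d A x y K \<phi> \<pi>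
      \<le> ennreal (1 + \<epsilon>) * match_charge d A x y (KK (r n)) (\<Phi> (r n)) \<pi>" if "\<pi> \<in> ?S" "\<epsilon> > 0" for \<pi> \<epsilon>
    using match_charge_eventually_ge[where KK="\<lambda>n. KK (r n)" and \<Phi>="\<lambda>n. \<Phi> (r n)",
        OF md x_pos y_pos K(2) KK(2) lim[rule_format] escape_I[rule_format] escape_J[rule_format] that] .
  then have "lp_norm p (match_charge d A x y K \<phi>) ?S \<le> ?W"
    by (rule lp_norm_le_of_eventually_dominated[OF p _ bound])
  then show ?thesis
    using matching_of_charge_bound[OF md dm p K _ W] that by blast
qed

section \<open>Geodesics in \<open>Dbar\<close> and \<open>Dfin\<close>\<close>

text \<open>For \<open>p = \<infinity>\<close>, unmatching a pair that is farther apart than both its points are from \<open>A\<close>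
  does not increase the cost. Afterwards an interpolated point is at most twice as far from \<open>A\<close> as
  the farther endpoint of its pair, which keeps the interpolating sums in \<open>Dbar\<close>.\<close>

lemma matching_infty_improve:
  assumes md: "metric_on d" and dm: "dist_minimizing d A" and m: "is_matching A (I, x) (J, y) (K, \<phi>, z, w)"
    and fin: "pcost d \<infinity> (I, x) (J, y) (K, \<phi>, z, w) < \<infinity>"
  obtains K' z' w' where "is_matching A (I, x) (J, y) (K', \<phi>, z', w')"
    "pcost d \<infinity> (I, x) (J, y) (K', \<phi>, z', w') \<le> pcost d \<infinity> (I, x) (J, y) (K, \<phi>, z, w)"
    "\<And>\<tau>. \<tau> \<in> match_index I J K' \<phi> \<Longrightarrow> d (match_src x w' \<tau>) (match_tgt y K' \<phi> z' \<tau>)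
       \<le> max (setdist_e d (match_src x w' \<tau>) A) (setdist_e d (match_tgt y K' \<phi> z' \<tau>) A)"
proof -
  have KI: "K \<subseteq> I" and inj: "inj_on \<phi> K" and KJ: "\<phi> ` K \<subseteq> J"
    and zA: "\<And>i. i \<in> I - K \<Longrightarrow> z i \<in> A" and wA: "\<And>j. j \<in> J - \<phi> ` K \<Longrightarrow> w j \<in> A"
    using m by (auto simp: is_matching_def)
  define C where "C = pcost d \<infinity> (I, x) (J, y) (K, \<phi>, z, w)"
  have C: "d (match_src x w \<tau>) (match_tgt y K \<phi> z \<tau>) \<le> C" if "\<tau> \<in> match_index I J K \<phi>" for \<tau>
    unfolding C_def pcost_eq_lp_norm[OF KI] by (rule le_lp_norm[OF _ that]) simp
  define K' where "K' = {i\<in>K. d (x i) (y (\<phi> i)) \<le> max (setdist_e d (x i) A) (setdist_e d (y (\<phi> i)) A)}"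
  define z' where "z' i = nearest d A (x i)" for i
  define w' where "w' j = nearest d A (y j)" for j
  have x_le: "setdist_e d (x i) A \<le> C" if "i \<in> I - K'" for i
  proof (cases "i \<in> K")
    case True
    then have "setdist_e d (x i) A \<le> d (x i) (y (\<phi> i))"
      using that by (auto simp: K'_def not_le max_less_iff_conj intro: less_imp_le)
    also have "\<dots> \<le> C" using C[of "Inl i"] True KI by (auto simp: match_index_def match_src_def match_tgt_def)
    finally show ?thesis .
  next
    case False
    then have "setdist_e d (x i) A \<le> d (x i) (z i)" using that zA by (auto intro: setdist_e_le)
    also have "\<dots> \<le> C" using C[of "Inl i"] False that by (auto simp: match_index_def match_src_def match_tgt_def)
    finally show ?thesis .
  qed
  have y_le: "setdist_e d (y j) A \<le> C" if "j \<in> J - \<phi> ` K'" for j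
  proof (cases "j \<in> \<phi> ` K")
    case True
    then obtain i where i: "i \<in> K" "j = \<phi> i" by blast
    then have "i \<notin> K'" using that by blast
    then have "setdist_e d (y j) A \<le> d (x i) (y (\<phi> i))"
      using i by (auto simp: K'_def not_le max_less_iff_conj intro: less_imp_le)
    also have "\<dots> \<le> C" using C[of "Inl i"] i KI by (auto simp: match_index_def match_src_def match_tgt_def)
    finally show ?thesis .
  next
    case False
    then have "setdist_e d (y j) A \<le> d (w j) (y j)"
      using that wA setdist_e_le[of "w j" A d "y j"] metric_onD(2)[OF md, of "w j" "y j"] by auto
    also have "\<dots> \<le> C" using C[of "Inr j"] False that by (auto simp: match_index_def match_src_def match_tgt_def)
    finally show ?thesis .
  qed
  have z': "z' i \<in> A" "d (x i) (z' i) = setdist_e d (x i) A" if "i \<in> I - K'" for i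
    using nearest[OF dm, of "x i"] x_le[OF that] fin by (auto simp: z'_def C_def)
  have w': "w' j \<in> A" "d (w' j) (y j) = setdist_e d (y j) A" if "j \<in> J - \<phi> ` K'" for j
    using nearest[OF dm, of "y j"] y_le[OF that] fin metric_onD(2)[OF md, of "y j"] by (auto simp: w'_def C_def)
  have K'K: "K' \<subseteq> K" by (auto simp: K'_def)
  have m': "is_matching A (I, x) (J, y) (K', \<phi>, z', w')"
    using K'K KI inj_on_subset[OF inj K'K] KJ z'(1) w'(1) by (auto simp: is_matching_def)
  have close: "d (match_src x w' \<tau>) (match_tgt y K' \<phi> z' \<tau>)
      \<le> max (setdist_e d (match_src x w' \<tau>) A) (setdist_e d (match_tgt y K' \<phi> z' \<tau>) A)"
    if "\<tau> \<in> match_index I J K' \<phi>" for \<tau>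
    using that z'(2) w'(2) by (auto simp: match_index_def match_src_def match_tgt_def K'_def)
  have "pcost d \<infinity> (I, x) (J, y) (K', \<phi>, z', w') \<le> C"
    unfolding pcost_eq_lp_norm[OF order_trans[OF K'K KI]] lp_norm_def
  proof (simp, rule SUP_least)
    fix \<tau> assume \<tau>: "\<tau> \<in> match_index I J K' \<phi>"
    show "d (match_src x w' \<tau>) (match_tgt y K' \<phi> z' \<tau>) \<le> C"
    proof (cases "\<exists>i\<in>K'. \<tau> = Inl i")
      case True
      then obtain i where i: "i \<in> K'" "\<tau> = Inl i" by blast
      then have "i \<in> K" "i \<in> I" using K'K KI by auto
      then show ?thesis
        using C[of "Inl i"] i by (simp add: match_index_def match_src_def match_tgt_def)
    next
      case False
      then show ?thesis
        using \<tau> z'(2) w'(2) x_le y_le by (auto simp: match_index_def match_src_def match_tgt_def)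
    qed
  qed
  then show ?thesis using that m' close by (simp add: C_def)
qed

lemma optimal_matching:
  assumes mp: "metric_pair d A" and dm: "dist_minimizing d A" and p: "1 \<le> p"
    and \<alpha>: "(I, x) \<in> Dbar d A p" and \<beta>: "(J, y) \<in> Dbar d A p" and W: "Wp d A p (I, x) (J, y) < \<infinity>"
  obtains K \<phi> z w where "is_matching A (I, x) (J, y) (K, \<phi>, z, w)"
    "pcost d p (I, x) (J, y) (K, \<phi>, z, w) \<le> Wp d A p (I, x) (J, y)"
    "\<And>\<tau>. p = \<infinity> \<Longrightarrow> \<tau> \<in> match_index I J K \<phi> \<Longrightarrow> d (match_src x w \<tau>) (match_tgt y K \<phi> z \<tau>)
       \<le> max (setdist_e d (match_src x w \<tau>) A) (setdist_e d (match_tgt y K \<phi> z \<tau>) A)"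
proof -
  have md: "metric_on d" using mp by (simp add: metric_pair_def)
  obtain K \<phi> z w where m: "is_matching A (I, x) (J, y) (K, \<phi>, z, w)"
    and opt: "pcost d p (I, x) (J, y) (K, \<phi>, z, w) \<le> Wp d A p (I, x) (J, y)"
  proof (rule optimal_matching_exists[OF mp dm p \<alpha> \<beta> W])
    fix K \<phi> z w assume "is_matching A (I, x) (J, y) (K, \<phi>, z, w)"
      "pcost d p (I, x) (J, y) (K, \<phi>, z, w) \<le> Wp d A p (I, x) (J, y)"
    then show thesis by (rule that)
  qed
  show ?thesis
  proof (cases "p = \<infinity>")
    case True
    have "pcost d \<infinity> (I, x) (J, y) (K, \<phi>, z, w) < \<infinity>" using opt W True by simp
    then obtain K' z' w' where m': "is_matching A (I, x) (J, y) (K', \<phi>, z', w')"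
      and cost: "pcost d \<infinity> (I, x) (J, y) (K', \<phi>, z', w') \<le> pcost d \<infinity> (I, x) (J, y) (K, \<phi>, z, w)"
      and close: "\<And>\<tau>. \<tau> \<in> match_index I J K' \<phi> \<Longrightarrow> d (match_src x w' \<tau>) (match_tgt y K' \<phi> z' \<tau>)
       \<le> max (setdist_e d (match_src x w' \<tau>) A) (setdist_e d (match_tgt y K' \<phi> z' \<tau>) A)"
      by (rule matching_infty_improve[OF md dm m[unfolded True]]) (rule that)
    show ?thesis
    proof (rule that[OF m'])
      show "pcost d p (I, x) (J, y) (K', \<phi>, z', w') \<le> Wp d A p (I, x) (J, y)"
        using order_trans[OF cost opt[unfolded True]] True by simp
    qed (rule close)
  next
    case False
    then show ?thesis using that[OF m opt] by blast
  qed
qed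

lemma geodesic_in_Dbar:
  assumes mp: "metric_pair d A" and gs: "geodesic_space UNIV d" and dm: "dist_minimizing d A" and p: "1 \<le> p"
    and \<alpha>: "\<alpha> \<in> Dbar d A p" and \<beta>: "\<beta> \<in> Dbar d A p" and W: "Wp d A p \<alpha> \<beta> < \<infinity>"
  obtains \<gamma> where "\<gamma> ` {0..1} \<subseteq> Dbar d A p" "\<gamma> 0 = \<alpha>" "\<gamma> 1 = \<beta>" "path_cont (Wp d A p) \<gamma>"
    "path_length (Wp d A p) \<gamma> = Wp d A p \<alpha> \<beta>" "\<alpha> \<in> Dfin A \<Longrightarrow> \<beta> \<in> Dfin A \<Longrightarrow> \<gamma> ` {0..1} \<subseteq> Dfin A"
proof -
  have md: "metric_on d" using mp by (simp add: metric_pair_def)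
  obtain I x J y where \<alpha>\<beta>: "\<alpha> = (I, x)" "\<beta> = (J, y)" by fastforce
  obtain K \<phi> z w where m: "is_matching A (I, x) (J, y) (K, \<phi>, z, w)"
    and opt: "pcost d p (I, x) (J, y) (K, \<phi>, z, w) \<le> Wp d A p (I, x) (J, y)"
    and close: "\<And>\<tau>. p = \<infinity> \<Longrightarrow> \<tau> \<in> match_index I J K \<phi> \<Longrightarrow> d (match_src x w \<tau>) (match_tgt y K \<phi> z \<tau>)
       \<le> max (setdist_e d (match_src x w \<tau>) A) (setdist_e d (match_tgt y K \<phi> z \<tau>) A)"
    by (rule optimal_matching[OF mp dm p \<alpha>[unfolded \<alpha>\<beta>] \<beta>[unfolded \<alpha>\<beta>] W[unfolded \<alpha>\<beta>]]) (rule that)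
  have "lp_norm p (\<lambda>\<tau>. d (match_src x w \<tau>) (match_tgt y K \<phi> z \<tau>)) (match_index I J K \<phi>) \<le> Wp d A p \<alpha> \<beta>"
    using opt m by (simp add: \<alpha>\<beta> pcost_eq_lp_norm is_matching_def)
  then obtain \<gamma> where \<gamma>: "\<gamma> ` {0..1} \<subseteq> Dbar d A p" "\<gamma> 0 = \<alpha>" "\<gamma> 1 = \<beta>" "path_cont (Wp d A p) \<gamma>"
    "path_length (Wp d A p) \<gamma> = Wp d A p \<alpha> \<beta>" "finite (match_index I J K \<phi>) \<Longrightarrow> \<gamma> ` {0..1} \<subseteq> Dfin A"
    by (rule geodesic_of_common_representation[OF md gs dm p \<alpha> \<beta> represents_match_src[OF m, folded \<alpha>\<beta>]
          represents_match_tgt[OF m, folded \<alpha>\<beta>] _ W close]) (assumption | rule that)+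
  moreover have "finite (match_index I J K \<phi>)" if "\<alpha> \<in> Dfin A" "\<beta> \<in> Dfin A"
    using that by (simp add: \<alpha>\<beta> Dfin_def match_index_def)
  ultimately show ?thesis using that by blast
qed

theorem theorem5p9:
  fixes d :: "'a \<Rightarrow> 'a \<Rightarrow> ennreal" and A :: "'a set" and p :: ereal
  assumes "metric_pair d A"
    and "geodesic_space UNIV d"
    and "dist_minimizing d A"
    and "1 \<le> p"
  shows "geodesic_space (Dbar d A p) (Wp d A p) \<and> geodesic_space (Dfin A) (Wp d A p)"
  unfolding geodesic_space_def
proof (intro conjI ballI impI)
  fix \<alpha> \<beta> assume "\<alpha> \<in> Dbar d A p" "\<beta> \<in> Dbar d A p" "Wp d A p \<alpha> \<beta> < \<infinity>"
  then show "\<exists>\<gamma>. \<gamma> ` {0..1} \<subseteq> Dbar d A p \<and> \<gamma> 0 = \<alpha> \<and> \<gamma> 1 = \<beta> \<and> path_cont (Wp d A p) \<gamma>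
      \<and> path_length (Wp d A p) \<gamma> = Wp d A p \<alpha> \<beta>"
    by (rule geodesic_in_Dbar[OF assms]) blast
next
  fix \<alpha> \<beta> assume fin: "\<alpha> \<in> Dfin A" "\<beta> \<in> Dfin A" and W: "Wp d A p \<alpha> \<beta> < \<infinity>"
  have "\<alpha> \<in> Dbar d A p" "\<beta> \<in> Dbar d A p"
    using fin Dfin_subset_Dbar[OF assms(4,3)] by auto
  then obtain \<gamma> where "\<gamma> 0 = \<alpha>" "\<gamma> 1 = \<beta>" "path_cont (Wp d A p) \<gamma>"
    "path_length (Wp d A p) \<gamma> = Wp d A p \<alpha> \<beta>" "\<gamma> ` {0..1} \<subseteq> Dfin A"
    using geodesic_in_Dbar[OF assms _ _ W] fin by metis
  then show "\<exists>\<gamma>. \<gamma> ` {0..1} \<subseteq> Dfin A \<and> \<gamma> 0 = \<alpha> \<and> \<gamma> 1 = \<beta> \<and> path_cont (Wp d A p) \<gamma>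
      \<and> path_length (Wp d A p) \<gamma> = Wp d A p \<alpha> \<beta>"
    by blast
qed

end
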